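(* Let a General Utility Markov Game (see context) satisfy (A1) for every $i$ and every $\pi_{-i}\in\Pi_{-i}$, $(\lambda_1,\dots,\lambda_N)\mapsto F_i(\lambda_1,\dots,\lambda_N,\pi_{-i})$ is jointly concave, and (A2) $d_\mu^\pi(s)>0$ for all $\pi\in\Pi$, $s\in\mathcal S$. Define the pseudo-gradient $v(\pi)=(v_i(\pi))_{i\in\mathcal N}$, $v_i(\pi)=\nabla_{\pi_i}u_{\mu,i}(\pi)$. Then a joint policy $\pi^\star\in\Pi$ is a Nash equilibrium if and only if $\langle v(\pi^\star),\pi-\pi^\star\rangle\le0$ for all $\pi\in\Pi$. Moreover, for any $\varepsilon>0$, if $\langle v(\pi^\star),\pi-\pi^\star\rangle\le\varepsilon$ for all $\pi\in\Pi$, then $\pi^\star$ is a $(C_{\mathcal G}\varepsilon)$-approximate Nash equilibrium, where $$C_{\mathcal G}:=\max_{i\in\mathcal N}\max_{\pi\in\Pi}\min_{\pi_i^\star\in\Pi_i^\star(\pi_{-i})}\Big\|\frac{d_\mu^{\pi_i^\star,\pi_{-i}}}{d_\mu^{\pi_i,\pi_{-i}}}\Big\|_\infty$$ and $\Pi_i^\star(\pi_{-i})$ is the set of maximizers of $\pi_i'\mapsto u_{\mu,i}(\pi_i',\pi_{-i})$ over $\Pi_i$.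
   Context: A GUMG consists of: agents $\mathcal N=\{1,\dots,N\}$; finite state space $\mathcal S$; finite action sets $\mathcal A_i$, joint $\mathcal A=\prod_i\mathcal A_i$; transition kernel $P:\mathcal S\times\mathcal A\to\Delta(\mathcal S)$; initial distribution $\mu\in\Delta(\mathcal S)$; discount $\gamma\in(0,1)$; and differentiable $F_i:\Lambda\times\Pi_{-i}\to\mathbb R$, $\Lambda=\prod_i\Delta(\mathcal S\times\mathcal A_i)$. Policies: $\Pi_i=\Delta(\mathcal A_i)^{\mathcal S}$ as vectors $(\pi_i(a_i|s))_{s,a_i}$; $\Pi=\prod_i\Pi_i$, $\Pi_{-i}=\prod_{j\neq i}\Pi_j$; joint action probabilities $\pi(a|s)=\prod_i\pi_i(a_i|s)$. With $\mathbb P_{\rho,\pi}$ the law of the induced chain started from $s_0\sim\rho$: $d_\rho^\pi(s)=(1-\gamma)\sum_t\gamma^t\mathbb P_{\rho,\pi}(s_t=s)$, $\lambda_{\rho,i}^\pi(s,a_i)=(1-\gamma)\sum_t\gamma^t\mathbb P_{\rho,\pi}(s_t=s,a_{i,t}=a_i)$. Utilities $u_{\mu,i}(\pi)=F_i(\lambda_{\mu,1}^\pi,\dots,\lambda_{\mu,N}^\pi,\pi_{-i})$; $\nabla_{\pi_i}$ is the gradient w.r.t. the coordinates $\pi_i(a_i|s)$. For $\varepsilon\ge0$, $\pi^\star$ is an $\varepsilon$-approximate Nash equilibrium if $u_{\mu,i}(\pi_i',\pi^\star_{-i})-u_{\mu,i}(\pi^\star)\le\varepsilon$ for all $i$ and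 all $\pi_i'\in\Pi_i$; a Nash equilibrium is the case $\varepsilon=0$. *)

theory Defs
  imports "HOL-Analysis.Analysis"
begin

text \<open>Actions of agent i: nonempty subset A i of the finite type 'a.  A policy of agent i is a
  function p :: 's => 'a => real with p s a = pi_i(a|s); it vanishes outside A i.
  Joint policies are functions 'i => 's => 'a => real; joint actions are elements of PiE UNIV A.\<close>

definition policy_set :: "('i \<Rightarrow> 'a set) \<Rightarrow> 'i \<Rightarrow> ('s::finite \<Rightarrow> 'a \<Rightarrow> real) set" where
  "policy_set A i = {p. \<forall>s. (\<forall>a\<in>A i. 0 \<le> p s a) \<and> (\<forall>a. a \<notin> A i \<longrightarrow> p s a = 0)
                          \<and> sum (p s) (A i) = 1}"

definition joint_policies :: "('i \<Rightarrow> 'a set) \<Rightarrow> ('i \<Rightarrow> 's::finite \<Rightarrow> 'a \<Rightarrow> real) set" where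
  "joint_policies A = {\<pi>. \<forall>i. \<pi> i \<in> policy_set A i}"

definition joint_actions :: "('i \<Rightarrow> 'a set) \<Rightarrow> ('i \<Rightarrow> 'a) set" where
  "joint_actions A = PiE UNIV A"

definition joint_prob :: "('i::finite \<Rightarrow> 's \<Rightarrow> 'a \<Rightarrow> real) \<Rightarrow> 's \<Rightarrow> ('i \<Rightarrow> 'a) \<Rightarrow> real" where
  "joint_prob \<pi> s a = (\<Prod>i\<in>UNIV. \<pi> i s (a i))"

primrec state_dist ::
  "('i::finite \<Rightarrow> 'a set) \<Rightarrow> ('s::finite \<Rightarrow> ('i \<Rightarrow> 'a) \<Rightarrow> 's \<Rightarrow> real) \<Rightarrow> ('s \<Rightarrow> real)
   \<Rightarrow> ('i \<Rightarrow> 's \<Rightarrow> 'a \<Rightarrow> real) \<Rightarrow> nat \<Rightarrow> 's \<Rightarrow> real" where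
  "state_dist A P \<rho> \<pi> 0 = \<rho>"
| "state_dist A P \<rho> \<pi> (Suc t) = (\<lambda>s'. \<Sum>s\<in>UNIV. \<Sum>a\<in>joint_actions A.
       state_dist A P \<rho> \<pi> t s * joint_prob \<pi> s a * P s a s')"

definition occ_state ::
  "('i::finite \<Rightarrow> 'a set) \<Rightarrow> ('s::finite \<Rightarrow> ('i \<Rightarrow> 'a) \<Rightarrow> 's \<Rightarrow> real) \<Rightarrow> real \<Rightarrow> ('s \<Rightarrow> real)
   \<Rightarrow> ('i \<Rightarrow> 's \<Rightarrow> 'a \<Rightarrow> real) \<Rightarrow> 's \<Rightarrow> real" where
  "occ_state A P \<gamma> \<rho> \<pi> s = (1 - \<gamma>) * (\<Sum>t. \<gamma> ^ t * state_dist A P \<rho> \<pi> t s)"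

text \<open>Agent occupancy lambda_{rho,i}^pi(s,a_i); P(s_t = s, a_{i,t} = a_i) = P(s_t = s) * pi_i(a_i|s).\<close>
definition occ_agent ::
  "('i::finite \<Rightarrow> 'a set) \<Rightarrow> ('s::finite \<Rightarrow> ('i \<Rightarrow> 'a) \<Rightarrow> 's \<Rightarrow> real) \<Rightarrow> real \<Rightarrow> ('s \<Rightarrow> real)
   \<Rightarrow> ('i \<Rightarrow> 's \<Rightarrow> 'a \<Rightarrow> real) \<Rightarrow> 'i \<Rightarrow> 's \<Rightarrow> 'a \<Rightarrow> real" where
  "occ_agent A P \<gamma> \<rho> \<pi> i s a = (1 - \<gamma>) * (\<Sum>t. \<gamma> ^ t * (state_dist A P \<rho> \<pi> t s * \<pi> i s a))"

definition occ_vec ::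
  "('i::finite \<Rightarrow> 'a::finite set) \<Rightarrow> ('s::finite \<Rightarrow> ('i \<Rightarrow> 'a) \<Rightarrow> 's \<Rightarrow> real) \<Rightarrow> real \<Rightarrow> ('s \<Rightarrow> real)
   \<Rightarrow> ('i \<Rightarrow> 's \<Rightarrow> 'a \<Rightarrow> real) \<Rightarrow> real ^ ('i \<times> 's \<times> 'a)" where
  "occ_vec A P \<gamma> \<rho> \<pi> = (\<chi> x. case x of (i, s, a) \<Rightarrow> occ_agent A P \<gamma> \<rho> \<pi> i s a)"

definition lam_set :: "('i::finite \<Rightarrow> 'a::finite set) \<Rightarrow> (real ^ ('i \<times> 's::finite \<times> 'a)) set" where
  "lam_set A = {l. \<forall>i. (\<forall>s a. a \<in> A i \<longrightarrow> 0 \<le> l $ (i, s, a))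
                   \<and> (\<forall>s a. a \<notin> A i \<longrightarrow> l $ (i, s, a) = 0)
                   \<and> (\<Sum>s\<in>UNIV. \<Sum>a\<in>A i. l $ (i, s, a)) = 1}"

text \<open>pi_{-i}: the joint policy with the i-th component erased (set to 0).\<close>
definition minus_vec ::
  "('i::finite \<Rightarrow> 's::finite \<Rightarrow> 'a::finite \<Rightarrow> real) \<Rightarrow> 'i \<Rightarrow> real ^ ('i \<times> 's \<times> 'a)" where
  "minus_vec \<pi> i = (\<chi> x. case x of (j, s, a) \<Rightarrow> if j = i then 0 else \<pi> j s a)"

definition utility ::
  "('i::finite \<Rightarrow> 'a::finite set) \<Rightarrow> ('s::finite \<Rightarrow> ('i \<Rightarrow> 'a) \<Rightarrow> 's \<Rightarrow> real) \<Rightarrow> real \<Rightarrow> ('s \<Rightarrow> real)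
   \<Rightarrow> ('i \<Rightarrow> ((real ^ ('i \<times> 's \<times> 'a)) \<times> (real ^ ('i \<times> 's \<times> 'a))) \<Rightarrow> real)
   \<Rightarrow> 'i \<Rightarrow> ('i \<Rightarrow> 's \<Rightarrow> 'a \<Rightarrow> real) \<Rightarrow> real" where
  "utility A P \<gamma> \<mu> F i \<pi> = F i (occ_vec A P \<gamma> \<mu> \<pi>, minus_vec \<pi> i)"

definition pseudo_grad ::
  "('i::finite \<Rightarrow> 'a::finite set) \<Rightarrow> ('s::finite \<Rightarrow> ('i \<Rightarrow> 'a) \<Rightarrow> 's \<Rightarrow> real) \<Rightarrow> real \<Rightarrow> ('s \<Rightarrow> real)
   \<Rightarrow> ('i \<Rightarrow> ((real ^ ('i \<times> 's \<times> 'a)) \<times> (real ^ ('i \<times> 's \<times> 'a))) \<Rightarrow> real)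
   \<Rightarrow> ('i \<Rightarrow> 's \<Rightarrow> 'a \<Rightarrow> real) \<Rightarrow> 'i \<Rightarrow> 's \<Rightarrow> 'a \<Rightarrow> real" where
  "pseudo_grad A P \<gamma> \<mu> F \<pi> i s a =
     deriv (\<lambda>t. utility A P \<gamma> \<mu> F i (\<pi>(i := (\<pi> i)(s := (\<pi> i s)(a := \<pi> i s a + t))))) 0"

definition grad_pairing ::
  "('i::finite \<Rightarrow> 'a::finite set) \<Rightarrow> ('s::finite \<Rightarrow> ('i \<Rightarrow> 'a) \<Rightarrow> 's \<Rightarrow> real) \<Rightarrow> real \<Rightarrow> ('s \<Rightarrow> real)
   \<Rightarrow> ('i \<Rightarrow> ((real ^ ('i \<times> 's \<times> 'a)) \<times> (real ^ ('i \<times> 's \<times> 'a))) \<Rightarrow> real)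
   \<Rightarrow> ('i \<Rightarrow> 's \<Rightarrow> 'a \<Rightarrow> real) \<Rightarrow> ('i \<Rightarrow> 's \<Rightarrow> 'a \<Rightarrow> real) \<Rightarrow> real" where
  "grad_pairing A P \<gamma> \<mu> F \<pi>0 \<pi> =
     (\<Sum>i\<in>UNIV. \<Sum>s\<in>UNIV. \<Sum>a\<in>A i. pseudo_grad A P \<gamma> \<mu> F \<pi>0 i s a * (\<pi> i s a - \<pi>0 i s a))"

definition approx_nash ::
  "('i::finite \<Rightarrow> 'a::finite set) \<Rightarrow> ('s::finite \<Rightarrow> ('i \<Rightarrow> 'a) \<Rightarrow> 's \<Rightarrow> real) \<Rightarrow> real \<Rightarrow> ('s \<Rightarrow> real)
   \<Rightarrow> ('i \<Rightarrow> ((real ^ ('i \<times> 's \<times> 'a)) \<times> (real ^ ('i \<times> 's \<times> 'a))) \<Rightarrow> real)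
   \<Rightarrow> real \<Rightarrow> ('i \<Rightarrow> 's \<Rightarrow> 'a \<Rightarrow> real) \<Rightarrow> bool" where
  "approx_nash A P \<gamma> \<mu> F \<epsilon> \<pi> \<longleftrightarrow>
     (\<forall>i. \<forall>p\<in>policy_set A i. utility A P \<gamma> \<mu> F i (\<pi>(i := p)) - utility A P \<gamma> \<mu> F i \<pi> \<le> \<epsilon>)"

definition nash ::
  "('i::finite \<Rightarrow> 'a::finite set) \<Rightarrow> ('s::finite \<Rightarrow> ('i \<Rightarrow> 'a) \<Rightarrow> 's \<Rightarrow> real) \<Rightarrow> real \<Rightarrow> ('s \<Rightarrow> real)
   \<Rightarrow> ('i \<Rightarrow> ((real ^ ('i \<times> 's \<times> 'a)) \<times> (real ^ ('i \<times> 's \<times> 'a))) \<Rightarrow> real)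
   \<Rightarrow> ('i \<Rightarrow> 's \<Rightarrow> 'a \<Rightarrow> real) \<Rightarrow> bool" where
  "nash A P \<gamma> \<mu> F \<pi> \<longleftrightarrow> approx_nash A P \<gamma> \<mu> F 0 \<pi>"

definition best_responses ::
  "('i::finite \<Rightarrow> 'a::finite set) \<Rightarrow> ('s::finite \<Rightarrow> ('i \<Rightarrow> 'a) \<Rightarrow> 's \<Rightarrow> real) \<Rightarrow> real \<Rightarrow> ('s \<Rightarrow> real)
   \<Rightarrow> ('i \<Rightarrow> ((real ^ ('i \<times> 's \<times> 'a)) \<times> (real ^ ('i \<times> 's \<times> 'a))) \<Rightarrow> real)
   \<Rightarrow> 'i \<Rightarrow> ('i \<Rightarrow> 's \<Rightarrow> 'a \<Rightarrow> real) \<Rightarrow> ('s \<Rightarrow> 'a \<Rightarrow> real) set" where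
  "best_responses A P \<gamma> \<mu> F i \<pi> =
     {p \<in> policy_set A i. \<forall>p'\<in>policy_set A i.
        utility A P \<gamma> \<mu> F i (\<pi>(i := p')) \<le> utility A P \<gamma> \<mu> F i (\<pi>(i := p))}"

definition C_G ::
  "('i::finite \<Rightarrow> 'a::finite set) \<Rightarrow> ('s::finite \<Rightarrow> ('i \<Rightarrow> 'a) \<Rightarrow> 's \<Rightarrow> real) \<Rightarrow> real \<Rightarrow> ('s \<Rightarrow> real)
   \<Rightarrow> ('i \<Rightarrow> ((real ^ ('i \<times> 's \<times> 'a)) \<times> (real ^ ('i \<times> 's \<times> 'a))) \<Rightarrow> real) \<Rightarrow> real" where
  "C_G A P \<gamma> \<mu> F =
     (MAX i\<in>UNIV. SUP \<pi>\<in>joint_policies A. INF p\<in>best_responses A P \<gamma> \<mu> F i \<pi>.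
        (MAX s\<in>UNIV. occ_state A P \<gamma> \<mu> (\<pi>(i := p)) s / occ_state A P \<gamma> \<mu> \<pi> s))"

end

theory Submission
  imports Defs
begin

(* Linearising F_i at the occupancy measure of the current joint policy turns agent i's problem
   into an ordinary discounted MDP whose reward is the gradient of F_i in the occupancy. For this
   MDP the policy gradient theorem gives v_i(pi)(s,a) = d^pi(s) Q(s,a), so <v(pi), pi' - pi> is a
   sum of d^pi-weighted advantages, and the performance difference lemma writes the change of the
   linearised utility under a unilateral deviation p as the d^(p,pi_-i)-weighted advantage of p.
   By concavity the true utility gain is at most the linearised one; bounding the advantage of p
   by that of a greedy policy and changing the weights from d^(p,pi_-i) to d^pi costs the factor
   max_s d^(p,pi_-i)(s) / d^pi(s). This gives the epsilon-bound, and with epsilon = 0 the "if"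
   direction. Conversely, at a Nash equilibrium the utility cannot increase along the segment
   towards any deviation, and its right derivative there is the weighted advantage. Compactness
   of the policy space and continuity of the occupancy measure yield best responses and a
   uniform lower bound on d^pi, so that the infimum and supremum defining C_G range over
   nonempty and bounded sets. *)

section \<open>Discounted resolvents of finite kernels\<close>

definition row_mult :: "('s::finite \<Rightarrow> real) \<Rightarrow> ('s \<Rightarrow> 's \<Rightarrow> real) \<Rightarrow> 's \<Rightarrow> real" where
  "row_mult x M = (\<lambda>s'. \<Sum>s\<in>UNIV. x s * M s s')"

definition col_mult :: "('s::finite \<Rightarrow> 's \<Rightarrow> real) \<Rightarrow> ('s \<Rightarrow> real) \<Rightarrow> 's \<Rightarrow> real" where
  "col_mult M v = (\<lambda>s. \<Sum>s'\<in>UNIV. M s s' * v s')"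

definition l1_norm :: "('s::finite \<Rightarrow> real) \<Rightarrow> real" where
  "l1_norm x = (\<Sum>s\<in>UNIV. \<bar>x s\<bar>)"

definition row_sums_le :: "('s::finite \<Rightarrow> 's \<Rightarrow> real) \<Rightarrow> real \<Rightarrow> bool" where
  "row_sums_le M K \<longleftrightarrow> (\<forall>s. (\<Sum>s'\<in>UNIV. \<bar>M s s'\<bar>) \<le> K)"

definition row_resolvent :: "real \<Rightarrow> ('s::finite \<Rightarrow> 's \<Rightarrow> real) \<Rightarrow> ('s \<Rightarrow> real) \<Rightarrow> 's \<Rightarrow> real" where
  "row_resolvent g M x = (\<lambda>s. \<Sum>n. g ^ n * ((\<lambda>y. row_mult y M) ^^ n) x s)"

definition col_resolvent :: "real \<Rightarrow> ('s::finite \<Rightarrow> 's \<Rightarrow> real) \<Rightarrow> ('s \<Rightarrow> real) \<Rightarrow> 's \<Rightarrow> real" where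
  "col_resolvent g M v = (\<lambda>s. \<Sum>n. g ^ n * (col_mult M ^^ n) v s)"

lemma l1_norm_nonneg: "0 \<le> l1_norm x"
  unfolding l1_norm_def by (simp add: sum_nonneg)

lemma abs_le_l1_norm: "\<bar>x s\<bar> \<le> l1_norm x"
  unfolding l1_norm_def by (rule member_le_sum) auto

lemma l1_norm_add_le: "l1_norm (\<lambda>s. x s + y s) \<le> l1_norm x + l1_norm y"
  unfolding l1_norm_def by (simp add: sum.distrib[symmetric] sum_mono abs_triangle_ineq)

lemma l1_norm_scale: "l1_norm (\<lambda>s. c * x s) = \<bar>c\<bar> * l1_norm x"
  unfolding l1_norm_def by (simp add: abs_mult sum_distrib_left)

lemma l1_norm_eq_0_iff: "l1_norm x = 0 \<longleftrightarrow> x = (\<lambda>s. 0)"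
  unfolding l1_norm_def by (simp add: sum_nonneg_eq_0_iff fun_eq_iff)

lemma row_sums_le_nonneg: "row_sums_le M K \<Longrightarrow> 0 \<le> K"
  unfolding row_sums_le_def by (meson order_trans sum_nonneg abs_ge_zero)

lemma row_mult_diff: "row_mult (\<lambda>s. x s - y s) M s' = row_mult x M s' - row_mult y M s'"
  unfolding row_mult_def by (simp add: algebra_simps sum_subtractf)

lemma sum_row_mult_mult: "(\<Sum>s\<in>UNIV. row_mult x M s * v s) = (\<Sum>s\<in>UNIV. x s * col_mult M v s)"
  unfolding row_mult_def col_mult_def
  by (simp add: sum_distrib_left sum_distrib_right mult_ac) (rule sum.swap)

lemma l1_norm_row_mult_le:
  assumes "row_sums_le M K"
  shows "l1_norm (row_mult x M) \<le> K * l1_norm x"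
proof -
  have "l1_norm (row_mult x M) \<le> (\<Sum>s'\<in>UNIV. \<Sum>s\<in>UNIV. \<bar>x s\<bar> * \<bar>M s s'\<bar>)"
    unfolding l1_norm_def row_mult_def
    by (intro sum_mono order_trans[OF sum_abs]) (simp add: abs_mult)
  also have "\<dots> = (\<Sum>s\<in>UNIV. \<bar>x s\<bar> * (\<Sum>s'\<in>UNIV. \<bar>M s s'\<bar>))"
    by (subst sum.swap) (simp add: sum_distrib_left)
  also have "\<dots> \<le> (\<Sum>s\<in>UNIV. \<bar>x s\<bar> * K)"
    using assms unfolding row_sums_le_def by (intro sum_mono mult_left_mono) auto
  finally show ?thesis
    unfolding l1_norm_def by (simp add: sum_distrib_left mult.commute)
qed

lemma l1_norm_row_mult_power_le:
  assumes "row_sums_le M K"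
  shows "l1_norm (((\<lambda>y. row_mult y M) ^^ n) x) \<le> K ^ n * l1_norm x"
proof (induction n)
  case (Suc n)
  have "l1_norm (((\<lambda>y. row_mult y M) ^^ Suc n) x) \<le> K * l1_norm (((\<lambda>y. row_mult y M) ^^ n) x)"
    using l1_norm_row_mult_le[OF assms] by simp
  also have "\<dots> \<le> K * (K ^ n * l1_norm x)"
    using Suc row_sums_le_nonneg[OF assms] by (rule mult_left_mono)
  finally show ?case by simp
qed simp

lemma abs_col_mult_power_le:
  assumes "row_sums_le M K"
  shows "\<bar>(col_mult M ^^ n) v s\<bar> \<le> K ^ n * l1_norm v"
proof (induction n arbitrary: s)
  case (Suc n)
  have "\<bar>(col_mult M ^^ Suc n) v s\<bar> = \<bar>\<Sum>s'\<in>UNIV. M s s' * (col_mult M ^^ n) v s'\<bar>"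
    by (simp add: col_mult_def)
  also have "\<dots> \<le> (\<Sum>s'\<in>UNIV. \<bar>M s s'\<bar> * (K ^ n * l1_norm v))"
    by (intro order_trans[OF sum_abs] sum_mono) (simp add: abs_mult mult_left_mono Suc.IH)
  also have "\<dots> \<le> K * (K ^ n * l1_norm v)"
    using assms row_sums_le_nonneg[OF assms] l1_norm_nonneg[of v] unfolding row_sums_le_def
    by (simp add: sum_distrib_right[symmetric] mult_right_mono)
  finally show ?case by simp
qed (simp add: abs_le_l1_norm)

lemma summable_power_mult_geometric_bound:
  fixes f :: "nat \<Rightarrow> real"
  assumes "\<And>n. \<bar>f n\<bar> \<le> C * K ^ n" and "0 \<le> g" "0 \<le> K" "g * K < 1"
  shows "summable (\<lambda>n. g ^ n * f n)"
proof (rule summable_comparison_test)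
  show "\<exists>N. \<forall>n\<ge>N. norm (g ^ n * f n) \<le> C * (g * K) ^ n"
  proof (intro exI allI impI)
    fix n :: nat
    have "\<bar>g ^ n * f n\<bar> \<le> g ^ n * (C * K ^ n)"
      using assms(1)[of n] assms(2) by (simp add: abs_mult mult_left_mono)
    thus "norm (g ^ n * f n) \<le> C * (g * K) ^ n"
      by (simp add: power_mult_distrib mult_ac)
  qed
  show "summable (\<lambda>n. C * (g * K) ^ n)"
    using assms(2-4) by (intro summable_mult summable_geometric) simp
qed

lemma summable_row_resolvent:
  assumes "row_sums_le M K" "0 \<le> g" "g * K < 1"
  shows "summable (\<lambda>n. g ^ n * ((\<lambda>y. row_mult y M) ^^ n) x s)"
proof (rule summable_power_mult_geometric_bound[OF _ assms(2) row_sums_le_nonneg[OF assms(1)] assms(3)])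
  show "\<bar>((\<lambda>y. row_mult y M) ^^ n) x s\<bar> \<le> l1_norm x * K ^ n" for n
    using abs_le_l1_norm[of "((\<lambda>y. row_mult y M) ^^ n) x" s] l1_norm_row_mult_power_le[OF assms(1), of n x]
    by (simp add: mult.commute)
qed

lemma summable_col_resolvent:
  assumes "row_sums_le M K" "0 \<le> g" "g * K < 1"
  shows "summable (\<lambda>n. g ^ n * (col_mult M ^^ n) v s)"
  using abs_col_mult_power_le[OF assms(1)]
  by (intro summable_power_mult_geometric_bound[OF _ assms(2) row_sums_le_nonneg[OF assms(1)] assms(3),
        where C = "l1_norm v"]) (simp add: mult.commute)

lemma suminf_power_mult_unfold:
  fixes f :: "nat \<Rightarrow> real"
  assumes "summable (\<lambda>n. g ^ n * f (Suc n))"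
  shows "(\<Sum>n. g ^ n * f n) = f 0 + g * (\<Sum>n. g ^ n * f (Suc n))"
proof -
  have "summable (\<lambda>n. g ^ Suc n * f (Suc n))"
    using summable_mult[OF assms, of g] by (simp add: mult_ac)
  hence "summable (\<lambda>n. g ^ n * f n)"
    by (subst summable_Suc_iff[symmetric])
  from suminf_split_head[OF this] show ?thesis
    using suminf_mult[OF assms, of g] by (simp add: mult_ac)
qed

lemma row_resolvent_fixpoint:
  assumes "row_sums_le M K" "0 \<le> g" "g * K < 1"
  shows "row_resolvent g M x s' = x s' + g * row_mult (row_resolvent g M x) M s'"
proof -
  let ?T = "\<lambda>y. row_mult y M"
  have sum: "summable (\<lambda>n. g ^ n * (?T ^^ n) x s)" for s
    by (rule summable_row_resolvent[OF assms])
  have "(\<Sum>n. g ^ n * (?T ^^ Suc n) x s') = (\<Sum>n. \<Sum>s\<in>UNIV. g ^ n * (?T ^^ n) x s * M s s')"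
    by (simp add: row_mult_def sum_distrib_left mult_ac)
  also have "\<dots> = (\<Sum>s\<in>UNIV. \<Sum>n. g ^ n * (?T ^^ n) x s * M s s')"
    using sum by (intro suminf_sum summable_mult2)
  also have "\<dots> = (\<Sum>s\<in>UNIV. (\<Sum>n. g ^ n * (?T ^^ n) x s) * M s s')"
    by (intro sum.cong refl suminf_mult2[symmetric] sum)
  also have "\<dots> = row_mult (row_resolvent g M x) M s'"
    by (simp add: row_mult_def row_resolvent_def)
  finally show ?thesis
    unfolding row_resolvent_def
    using suminf_power_mult_unfold[where f = "\<lambda>n. (?T ^^ n) x s'"]
      summable_row_resolvent[OF assms, of "?T x"]
    by (simp add: funpow_Suc_right del: funpow.simps)
qed

lemma col_resolvent_fixpoint:
  assumes "row_sums_le M K" "0 \<le> g" "g * K < 1"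
  shows "col_resolvent g M v s = v s + g * col_mult M (col_resolvent g M v) s"
proof -
  have sum: "summable (\<lambda>n. g ^ n * (col_mult M ^^ n) v s')" for s'
    by (rule summable_col_resolvent[OF assms])
  have "(\<Sum>n. g ^ n * (col_mult M ^^ Suc n) v s) = (\<Sum>n. \<Sum>s'\<in>UNIV. M s s' * (g ^ n * (col_mult M ^^ n) v s'))"
    by (simp add: col_mult_def sum_distrib_left mult_ac)
  also have "\<dots> = (\<Sum>s'\<in>UNIV. \<Sum>n. M s s' * (g ^ n * (col_mult M ^^ n) v s'))"
    using sum by (intro suminf_sum summable_mult)
  also have "\<dots> = (\<Sum>s'\<in>UNIV. M s s' * (\<Sum>n. g ^ n * (col_mult M ^^ n) v s'))"
    by (intro sum.cong refl suminf_mult sum)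
  also have "\<dots> = col_mult M (col_resolvent g M v) s"
    by (simp add: col_mult_def col_resolvent_def)
  finally show ?thesis
    unfolding col_resolvent_def
    using suminf_power_mult_unfold[where f = "\<lambda>n. (col_mult M ^^ n) v s"]
      summable_col_resolvent[OF assms, of "col_mult M v"]
    by (simp add: funpow_Suc_right del: funpow.simps)
qed

lemma l1_norm_le_of_row_fixpoint:
  assumes "row_sums_le M K" "0 \<le> g" "g * K < 1"
    and "\<And>s'. y s' = z s' + g * row_mult y M s'"
  shows "l1_norm y \<le> l1_norm z / (1 - g * K)"
proof -
  have "l1_norm y \<le> l1_norm z + l1_norm (\<lambda>s'. g * row_mult y M s')"
    using l1_norm_add_le[of z "\<lambda>s'. g * row_mult y M s'"] assms(4)[symmetric] by simp
  also have "\<dots> \<le> l1_norm z + g * (K * l1_norm y)"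
    using l1_norm_row_mult_le[OF assms(1), of y] assms(2)
    by (simp add: l1_norm_scale mult_left_mono)
  finally have "(1 - g * K) * l1_norm y \<le> l1_norm z"
    by (simp add: algebra_simps)
  thus ?thesis
    using assms(3) by (simp add: field_simps)
qed

lemma row_resolvent_unique:
  assumes "row_sums_le M K" "0 \<le> g" "g * K < 1"
    and "\<And>s'. y s' = x s' + g * row_mult y M s'"
  shows "y = row_resolvent g M x"
proof -
  let ?d = "\<lambda>s. y s - row_resolvent g M x s"
  have "?d s' = 0 + g * row_mult ?d M s'" for s'
    using assms(4)[of s'] row_resolvent_fixpoint[OF assms(1-3), of x s']
    by (simp add: row_mult_diff algebra_simps)
  from l1_norm_le_of_row_fixpoint[OF assms(1-3) this] have "l1_norm ?d \<le> 0"
    by (simp add: l1_norm_def)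
  hence "?d = (\<lambda>s. 0)"
    using l1_norm_nonneg[of ?d] l1_norm_eq_0_iff[of ?d] by linarith
  thus ?thesis
    by (auto simp: fun_eq_iff dest: fun_cong)
qed

lemma sum_mult_row_fixpoint:
  assumes "\<And>s'. y s' = x s' + g * row_mult y M s'"
  shows "(\<Sum>s\<in>UNIV. x s * v s) = (\<Sum>s\<in>UNIV. y s * (v s - g * col_mult M v s))"
proof -
  have "(\<Sum>s\<in>UNIV. x s * v s) = (\<Sum>s\<in>UNIV. y s * v s) - g * (\<Sum>s\<in>UNIV. row_mult y M s * v s)"
    unfolding eq_diff_eq[THEN iffD2, OF assms[symmetric]]
    by (simp add: algebra_simps sum_subtractf sum_distrib_left)
  also have "\<dots> = (\<Sum>s\<in>UNIV. y s * v s) - g * (\<Sum>s\<in>UNIV. y s * col_mult M v s)"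
    by (simp only: sum_row_mult_mult)
  also have "\<dots> = (\<Sum>s\<in>UNIV. y s * (v s - g * col_mult M v s))"
    by (simp add: algebra_simps sum_subtractf sum_distrib_left)
  finally show ?thesis .
qed

lemma row_sums_le_rank_one_update:
  assumes "row_sums_le M K"
  shows "row_sums_le (\<lambda>s s'. M s s' + t * (if s = s0 then e s' else 0)) (K + \<bar>t\<bar> * l1_norm e)"
  unfolding row_sums_le_def
proof
  fix s
  let ?E = "\<lambda>s'. if s = s0 then e s' else 0"
  have "\<bar>M s s' + t * ?E s'\<bar> \<le> \<bar>M s s'\<bar> + \<bar>t\<bar> * \<bar>?E s'\<bar>" for s'
    using abs_triangle_ineq[of "M s s'" "t * ?E s'"] by (simp only: abs_mult)
  hence "(\<Sum>s'\<in>UNIV. \<bar>M s s' + t * ?E s'\<bar>) \<le> (\<Sum>s'\<in>UNIV. \<bar>M s s'\<bar>) + \<bar>t\<bar> * (\<Sum>s'\<in>UNIV. \<bar>?E s'\<bar>)"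
    unfolding sum_distrib_left sum.distrib[symmetric] by (rule sum_mono)
  moreover have "\<bar>t\<bar> * (\<Sum>s'\<in>UNIV. \<bar>?E s'\<bar>) \<le> \<bar>t\<bar> * l1_norm e"
    unfolding l1_norm_def by (intro mult_left_mono abs_ge_zero) (cases "s = s0"; simp add: sum_nonneg)
  ultimately show "(\<Sum>s'\<in>UNIV. \<bar>M s s' + t * ?E s'\<bar>) \<le> K + \<bar>t\<bar> * l1_norm e"
    using assms[unfolded row_sums_le_def, rule_format, of s] by linarith
qed

text \<open>Sherman--Morrison formula for a perturbation of one row of the kernel.\<close>
lemma row_resolvent_rank_one_update:
  fixes M :: "'s::finite \<Rightarrow> 's \<Rightarrow> real" and e x :: "'s \<Rightarrow> real" and g t :: real
  defines "R \<equiv> row_resolvent g M e"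
  assumes M: "row_sums_le M K" and g: "0 \<le> g" "g * (K + \<bar>t\<bar> * l1_norm e) < 1"
    and den: "g * t * R s0 \<noteq> 1"
  shows "row_resolvent g (\<lambda>s s'. M s s' + t * (if s = s0 then e s' else 0)) x
       = (\<lambda>s. row_resolvent g M x s + g * t * row_resolvent g M x s0 / (1 - g * t * R s0) * R s)"
proof -
  define X where "X = row_resolvent g M x"
  define k where "k = g * t * X s0 / (1 - g * t * R s0)"
  have "g * K \<le> g * (K + \<bar>t\<bar> * l1_norm e)"
    using g(1) l1_norm_nonneg[of e] by (intro mult_left_mono) auto
  with g(2) have gK: "g * K < 1" by linarith
  have X: "X s' = x s' + g * row_mult X M s'" and R: "R s' = e s' + g * row_mult R M s'" for s'
    unfolding R_def X_def by (rule row_resolvent_fixpoint[OF M g(1) gK])+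
  have "k * (1 - g * t * R s0) = g * t * X s0"
    using den by (simp add: k_def)
  hence k: "k = g * t * (X s0 + k * R s0)"
    by (simp add: algebra_simps)
  have "(\<lambda>s. X s + k * R s) = row_resolvent g (\<lambda>s s'. M s s' + t * (if s = s0 then e s' else 0)) x"
  proof (rule row_resolvent_unique[OF row_sums_le_rank_one_update[OF M] g])
    fix s'
    have expand: "(X s + k * R s) * (M s s' + t * (if s = s0 then e s' else 0))
        = X s * M s s' + k * (R s * M s s') + (if s = s0 then t * (X s0 + k * R s0) * e s' else 0)" for s
      by (simp add: algebra_simps)
    have "row_mult (\<lambda>s. X s + k * R s) (\<lambda>s s'. M s s' + t * (if s = s0 then e s' else 0)) s'
        = row_mult X M s' + k * row_mult R M s' + t * (X s0 + k * R s0) * e s'"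
      unfolding row_mult_def expand sum.distrib by (simp add: sum_distrib_left)
    then show "X s' + k * R s' = x s' + g * row_mult (\<lambda>s. X s + k * R s) (\<lambda>s s'. M s s' + t * (if s = s0 then e s' else 0)) s'"
      using X[of s'] R[of s'] arg_cong[OF k, of "\<lambda>z. z * e s'"] by (simp add: algebra_simps)
  qed
  thus ?thesis
    unfolding X_def k_def by simp
qed

section \<open>Calculus\<close>

lemma tendsto_at_right_0_of_lipschitz:
  fixes y :: "real \<Rightarrow> 'v::real_normed_vector"
  assumes "eventually (\<lambda>t. norm (y t - x) \<le> B * t) (at_right 0)"
  shows "(y \<longlongrightarrow> x) (at_right 0)"
proof -
  have "((\<lambda>t. y t - x) \<longlongrightarrow> 0) (at_right 0)"
    using assms tendsto_mult_right_zero[OF tendsto_ident_at[of "0::real" "{0<..}"], of B]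
    by (rule Lim_null_comparison)
  thus ?thesis
    by (rule LIM_zero_cancel)
qed

lemma has_derivative_remainder_tendsto_zero:
  fixes F :: "'v::real_normed_vector \<Rightarrow> real"
  assumes F: "(F has_derivative F') (at x)"
    and y_lipschitz: "eventually (\<lambda>t. norm (y t - x) \<le> B * t) (at_right 0)"
  shows "((\<lambda>t. (F (y t) - F x - F' (y t - x)) / t) \<longlongrightarrow> 0) (at_right (0::real))"
proof -
  have y: "(y \<longlongrightarrow> x) (at_right 0)"
    using y_lipschitz by (rule tendsto_at_right_0_of_lipschitz)
  define G where "G z = (F z - F x - F' (z - x)) /\<^sub>R norm (z - x)" for z
  have "(G \<longlongrightarrow> 0) (at x)"
    using has_derivative_at_within[of F F' x UNIV] F unfolding G_def by simp
  hence "isCont G x"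
    unfolding isCont_def G_def by simp
  hence G_y: "((\<lambda>t. G (y t)) \<longlongrightarrow> 0) (at_right 0)"
    using isCont_tendsto_compose[OF _ y] by (force simp: G_def)
  have remainder: "F z - F x - F' (z - x) = norm (z - x) * G z" for z
    using linear_0[OF has_derivative_linear[OF F]] by (cases "z = x") (simp_all add: G_def)
  show ?thesis
  proof (rule Lim_null_comparison)
    show "eventually (\<lambda>t. norm ((F (y t) - F x - F' (y t - x)) / t) \<le> B * \<bar>G (y t)\<bar>) (at_right 0)"
      using y_lipschitz eventually_at_right_less[of "0::real"]
    proof eventually_elim
      case (elim t)
      have "norm ((F (y t) - F x - F' (y t - x)) / t) = norm (y t - x) * \<bar>G (y t)\<bar> / t"
        unfolding remainder using elim by (simp add: abs_mult)
      also have "\<dots> \<le> B * t * \<bar>G (y t)\<bar> / t"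
        using elim by (intro divide_right_mono mult_right_mono) auto
      finally show ?case
        using elim by simp
    qed
    show "((\<lambda>t. B * \<bar>G (y t)\<bar>) \<longlongrightarrow> 0) (at_right 0)"
      using tendsto_mult_right_zero[OF tendsto_rabs_zero[OF G_y], of B] by simp
  qed
qed

lemma concave_on_le_tangent:
  fixes F :: "'v::real_normed_vector \<Rightarrow> real"
  assumes F: "(F has_derivative F') (at x)" and concave: "concave_on S F" and "x \<in> S" "y \<in> S"
  shows "F y - F x \<le> F' (y - x)"
proof -
  let ?z = "\<lambda>t::real. x + t *\<^sub>R (y - x)"
  have "((\<lambda>t. (F (?z t) - F x - F' (?z t - x)) / t) \<longlongrightarrow> 0) (at_right 0)"
  proof (rule has_derivative_remainder_tendsto_zero[OF F, where B = "norm (y - x)"])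
    show "eventually (\<lambda>t. norm (?z t - x) \<le> norm (y - x) * t) (at_right 0)"
      using eventually_at_right_less[of "0::real"] by eventually_elim (simp add: mult.commute)
  qed
  moreover have "eventually (\<lambda>t. F y - F x - F' (y - x) \<le> (F (?z t) - F x - F' (?z t - x)) / t) (at_right 0)"
    using eventually_at_right_real[OF zero_less_one]
  proof eventually_elim
    case (elim t)
    have "(1 - t) * F x + t * F y \<le> F ((1 - t) *\<^sub>R x + t *\<^sub>R y)"
      using concave_onD[OF concave, of t x y] elim assms(3,4) by simp
    moreover have "F' (?z t - x) = t * F' (y - x)"
      using linear_scale[OF has_derivative_linear[OF F]] by simp
    ultimately have "t * (F y - F x - F' (y - x)) \<le> F (?z t) - F x - F' (?z t - x)"
      by (simp add: algebra_simps)
    thus ?case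
      using elim by (simp add: field_simps)
  qed
  ultimately have "F y - F x - F' (y - x) \<le> 0"
    by (rule tendsto_lowerbound) simp
  thus ?thesis by simp
qed

lemma linear_has_derivative_fst:
  assumes "(G has_derivative D) net"
  shows "linear (\<lambda>h. D (h, 0))"
  using bounded_linear_compose[OF has_derivative_bounded_linear[OF assms]
      bounded_linear_Pair[OF bounded_linear_ident bounded_linear_zero]]
  by (rule bounded_linear.linear)

lemma linear_eq_sum_axis:
  fixes l :: "real ^ 'n \<Rightarrow> real"
  assumes "linear l"
  shows "l h = (\<Sum>x\<in>UNIV. h $ x * l (axis x 1))"
proof -
  have "l h = l (\<Sum>x\<in>UNIV. h $ x *\<^sub>R axis x 1)"
    using basis_expansion[of h] by (simp add: scalar_mult_eq_scaleR)
  thus ?thesis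
    by (simp add: linear_sum[OF assms] linear_scale[OF assms])
qed

lemma has_vector_derivative_vec_lambda:
  fixes f :: "'n::finite \<Rightarrow> real \<Rightarrow> real"
  assumes "\<And>x. (f x has_real_derivative f' x) F"
  shows "((\<lambda>t. \<chi> x. f x t) has_vector_derivative (\<chi> x. f' x)) F"
proof -
  have vec_eq: "(\<chi> x. g x) = (\<Sum>x\<in>UNIV. g x *\<^sub>R axis x 1)" for g :: "'n \<Rightarrow> real"
    using basis_expansion[of "\<chi> x. g x"] by (simp add: scalar_mult_eq_scaleR)
  have "((\<lambda>t. \<Sum>x\<in>UNIV. f x t *\<^sub>R axis x 1) has_vector_derivative (\<Sum>x\<in>UNIV. f' x *\<^sub>R axis x (1::real))) F"
    using assms
    by (intro has_vector_derivative_sum bounded_linear.has_vector_derivative[OF bounded_linear_scaleR_left])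
      (simp add: has_real_derivative_iff_has_vector_derivative)
  thus ?thesis
    unfolding vec_eq .
qed

lemma norm_le_of_abs_components_le:
  fixes v :: "real ^ 'n"
  assumes "\<And>x. \<bar>v $ x\<bar> \<le> t * b x"
  shows "norm v \<le> (\<Sum>x\<in>UNIV. b x) * t"
proof -
  have "norm v \<le> (\<Sum>x\<in>UNIV. \<bar>v $ x\<bar>)"
    by (rule norm_le_l1_cart)
  also have "\<dots> \<le> (\<Sum>x\<in>UNIV. t * b x)"
    using assms by (rule sum_mono)
  finally show ?thesis
    by (simp add: sum_distrib_left mult.commute)
qed

lemma sum_UNIV_triple:
  "(\<Sum>x\<in>UNIV. f x) = (\<Sum>j\<in>UNIV. \<Sum>s\<in>UNIV. \<Sum>a\<in>UNIV. f (j::'i::finite, s::'s::finite, a::'a::finite))"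
  by (simp add: sum.cartesian_product UNIV_Times_UNIV[symmetric] del: UNIV_Times_UNIV)

section \<open>Policies\<close>

lemma joint_policiesD:
  assumes "\<pi> \<in> joint_policies A"
  shows "a \<in> A j \<Longrightarrow> 0 \<le> \<pi> j s a" and "a \<notin> A j \<Longrightarrow> \<pi> j s a = 0" and "sum (\<pi> j s) (A j) = 1"
  using assms unfolding joint_policies_def policy_set_def by auto

lemma fun_upd_in_joint_policies:
  "\<pi> \<in> joint_policies A \<Longrightarrow> p \<in> policy_set A i \<Longrightarrow> \<pi>(i := p) \<in> joint_policies A"
  unfolding joint_policies_def by auto

lemma segment_in_policy_set:
  assumes "q \<in> policy_set A i" "p \<in> policy_set A i" "0 \<le> t" "t \<le> 1"
  shows "(\<lambda>s a. q s a + t * (p s a - q s a)) \<in> policy_set A i"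
proof -
  have "0 \<le> q s a + t * (p s a - q s a)" if "a \<in> A i" for s a
  proof -
    have "0 \<le> (1 - t) * q s a + t * p s a"
      using assms that unfolding policy_set_def by auto
    thus ?thesis by (simp add: algebra_simps)
  qed
  thus ?thesis
    using assms unfolding policy_set_def
    by (simp add: sum.distrib sum_subtractf sum_distrib_left[symmetric])
qed

lemma abs_policy_le_1:
  fixes A :: "'i \<Rightarrow> 'a::finite set"
  assumes "\<pi> \<in> joint_policies A"
  shows "\<bar>\<pi> j s a\<bar> \<le> 1"
proof (cases "a \<in> A j")
  case True
  hence "\<pi> j s a \<le> sum (\<pi> j s) (A j)"
    using joint_policiesD(1)[OF assms] by (intro member_le_sum) auto
  thus ?thesis
    using joint_policiesD(1,3)[OF assms] True by auto
qed (simp add: joint_policiesD(2)[OF assms])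

lemma sum_joint_prob:
  fixes A :: "'i::finite \<Rightarrow> 'a::finite set"
  assumes "\<pi> \<in> joint_policies A"
  shows "(\<Sum>b\<in>joint_actions A. joint_prob \<pi> s b) = 1"
proof -
  have "(\<Sum>b\<in>joint_actions A. joint_prob \<pi> s b) = (\<Prod>i\<in>UNIV. \<Sum>a\<in>A i. \<pi> i s a)"
    unfolding joint_actions_def joint_prob_def by (rule prod_sum_PiE[symmetric]) auto
  thus ?thesis
    using joint_policiesD(3)[OF assms] by simp
qed

lemma joint_prob_nonneg:
  "\<pi> \<in> joint_policies A \<Longrightarrow> b \<in> joint_actions A \<Longrightarrow> 0 \<le> joint_prob \<pi> s b"
  unfolding joint_prob_def joint_actions_def
  by (intro prod_nonneg) (auto simp: PiE_iff joint_policiesD(1))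

lemma minus_vec_fun_upd [simp]: "minus_vec (\<pi>(i := p)) i = minus_vec \<pi> i"
  unfolding minus_vec_def by (simp add: vec_eq_iff split: prod.splits)

lemma best_responses_in_policy_set: "p \<in> best_responses A P \<gamma> \<mu> F i \<pi> \<Longrightarrow> p \<in> policy_set A i"
  unfolding best_responses_def by blast

definition policy_of_vec :: "real ^ ('i::finite \<times> 's::finite \<times> 'a::finite) \<Rightarrow> 'i \<Rightarrow> 's \<Rightarrow> 'a \<Rightarrow> real" where
  "policy_of_vec x = (\<lambda>j s a. x $ (j, s, a))"

definition vec_of_policy :: "('i \<Rightarrow> 's \<Rightarrow> 'a \<Rightarrow> real) \<Rightarrow> real ^ ('i::finite \<times> 's::finite \<times> 'a::finite)" where
  "vec_of_policy \<pi> = (\<chi> x. case x of (j, s, a) \<Rightarrow> \<pi> j s a)"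

definition joint_policy_vecs :: "('i \<Rightarrow> 'a set) \<Rightarrow> (real ^ ('i::finite \<times> 's::finite \<times> 'a::finite)) set" where
  "joint_policy_vecs A = {x. policy_of_vec x \<in> joint_policies A}"

lemma policy_of_vec_of_policy [simp]: "policy_of_vec (vec_of_policy \<pi>) = \<pi>"
  unfolding policy_of_vec_def vec_of_policy_def by simp

lemma vec_of_policy_in_joint_policy_vecs:
  "\<pi> \<in> joint_policies A \<Longrightarrow> vec_of_policy \<pi> \<in> joint_policy_vecs A"
  unfolding joint_policy_vecs_def by simp

lemma compact_joint_policy_vecs:
  fixes A :: "'i::finite \<Rightarrow> 'a::finite set"
  shows "compact (joint_policy_vecs A :: (real ^ ('i \<times> 's::finite \<times> 'a)) set)"
  unfolding compact_eq_bounded_closed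
proof
  let ?S = "joint_policy_vecs A :: (real ^ ('i \<times> 's \<times> 'a)) set"
  have "?S = {x. (\<forall>j s a. a \<in> A j \<longrightarrow> 0 \<le> x $ (j, s, a))
      \<and> (\<forall>j s a. a \<notin> A j \<longrightarrow> x $ (j, s, a) = 0) \<and> (\<forall>j s. (\<Sum>a\<in>A j. x $ (j, s, a)) = 1)}"
    unfolding joint_policy_vecs_def joint_policies_def policy_set_def policy_of_vec_def by auto
  also have "closed \<dots>"
    by (intro closed_Collect_conj closed_Collect_all closed_Collect_imp open_Collect_const
        closed_Collect_le closed_Collect_eq continuous_on_const continuous_on_sum
        continuous_on_component continuous_on_id)
  finally show "closed ?S" .
  show "bounded ?S"
    unfolding bounded_iff
  proof (intro exI ballI)
    fix x assume "x \<in> ?S"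
    hence "\<bar>x $ (j, s, a)\<bar> \<le> 1" for j s a
      using abs_policy_le_1 unfolding joint_policy_vecs_def policy_of_vec_def by fastforce
    hence "\<bar>x $ k\<bar> \<le> 1" for k
      by (cases k) auto
    hence "(\<Sum>k\<in>UNIV. \<bar>x $ k\<bar>) \<le> real CARD('i \<times> 's \<times> 'a)"
      using sum_bounded_above[of UNIV "\<lambda>k. \<bar>x $ k\<bar>" 1] by simp
    thus "norm x \<le> real CARD('i \<times> 's \<times> 'a)"
      using norm_le_l1_cart[of x] by linarith
  qed
qed

lemma exists_greedy_policy:
  fixes A :: "'i \<Rightarrow> 'a::finite set"
  assumes "A i \<noteq> {}"
  obtains q where "q \<in> policy_set A i"
    and "\<And>r s. r \<in> policy_set A i \<Longrightarrow> (\<Sum>a\<in>A i. r s a * Q s a) \<le> (\<Sum>a\<in>A i. q s a * Q s a)"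
proof -
  have "Max (Q s ` A i) \<in> Q s ` A i" for s
    using assms by (intro Max_in) auto
  hence "\<forall>s. \<exists>a. a \<in> A i \<and> Q s a = Max (Q s ` A i)"
    by (metis imageE)
  then obtain amax where amax: "\<And>s. amax s \<in> A i" "\<And>s. Q s (amax s) = Max (Q s ` A i)"
    using choice[of "\<lambda>s a. a \<in> A i \<and> Q s a = Max (Q s ` A i)"] by blast
  define q where "q s a = (if a = amax s then 1 else 0 :: real)" for s a
  have "(\<Sum>a\<in>A i. r s a * Q s a) \<le> (\<Sum>a\<in>A i. q s a * Q s a)" if r: "r \<in> policy_set A i" for r s
  proof -
    have "(\<Sum>a\<in>A i. r s a * Q s a) \<le> (\<Sum>a\<in>A i. r s a * Q s (amax s))"
      using r amax(2) Max_ge[of "Q s ` A i"] unfolding policy_set_def by (intro sum_mono mult_left_mono) auto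
    also have "\<dots> = Q s (amax s)"
      using r unfolding policy_set_def by (simp add: sum_distrib_right[symmetric])
    also have "\<dots> = (\<Sum>a\<in>A i. if a = amax s then Q s (amax s) else 0)"
      using amax(1) by simp
    also have "\<dots> = (\<Sum>a\<in>A i. q s a * Q s a)"
      by (intro sum.cong) (auto simp: q_def)
    finally show ?thesis .
  qed
  moreover have "q \<in> policy_set A i"
    using amax(1) unfolding policy_set_def q_def by auto
  ultimately show ?thesis
    using that by blast
qed

section \<open>Occupancy measures\<close>

locale discounted_markov_game =
  fixes A :: "'i::finite \<Rightarrow> 'a::finite set"
    and P :: "'s::finite \<Rightarrow> ('i \<Rightarrow> 'a) \<Rightarrow> 's \<Rightarrow> real"
    and \<mu> :: "'s \<Rightarrow> real"
    and \<gamma> :: real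
  assumes actions_nonempty: "\<forall>i. A i \<noteq> {}"
    and P_kernel: "\<forall>s. \<forall>a\<in>joint_actions A. (\<forall>s'. 0 \<le> P s a s') \<and> (\<Sum>s'\<in>UNIV. P s a s') = 1"
    and mu_dist: "(\<forall>s. 0 \<le> \<mu> s) \<and> (\<Sum>s\<in>UNIV. \<mu> s) = 1"
    and gamma_pos: "0 < \<gamma>" and gamma_less_1: "\<gamma> < 1"
begin

abbreviation occ :: "('i \<Rightarrow> 's \<Rightarrow> 'a \<Rightarrow> real) \<Rightarrow> 's \<Rightarrow> real" where
  "occ \<equiv> occ_state A P \<gamma> \<mu>"

abbreviation occ_vector :: "('i \<Rightarrow> 's \<Rightarrow> 'a \<Rightarrow> real) \<Rightarrow> real ^ ('i \<times> 's \<times> 'a)" where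
  "occ_vector \<equiv> occ_vec A P \<gamma> \<mu>"

abbreviation max_occ_ratio :: "('i \<Rightarrow> 's \<Rightarrow> 'a \<Rightarrow> real) \<Rightarrow> 'i \<Rightarrow> ('s \<Rightarrow> 'a \<Rightarrow> real) \<Rightarrow> real" where
  "max_occ_ratio \<pi> i p \<equiv> MAX s\<in>UNIV. occ (\<pi>(i := p)) s / occ \<pi> s"

definition trans_matrix :: "('i \<Rightarrow> 's \<Rightarrow> 'a \<Rightarrow> real) \<Rightarrow> 's \<Rightarrow> 's \<Rightarrow> real" where
  "trans_matrix \<pi> s s' = (\<Sum>b\<in>joint_actions A. joint_prob \<pi> s b * P s b s')"

definition agent_kernel :: "('i \<Rightarrow> 's \<Rightarrow> 'a \<Rightarrow> real) \<Rightarrow> 'i \<Rightarrow> 's \<Rightarrow> 'a \<Rightarrow> 's \<Rightarrow> real" where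
  "agent_kernel \<pi> i s a s' =
     (\<Sum>b\<in>{b\<in>joint_actions A. b i = a}. (\<Prod>j\<in>UNIV - {i}. \<pi> j s (b j)) * P s b s')"

definition visits :: "('i \<Rightarrow> 's \<Rightarrow> 'a \<Rightarrow> real) \<Rightarrow> 's \<Rightarrow> real" where
  "visits \<pi> = row_resolvent \<gamma> (trans_matrix \<pi>) \<mu>"

lemma trans_matrix_nonneg:
  "\<pi> \<in> joint_policies A \<Longrightarrow> 0 \<le> trans_matrix \<pi> s s'"
  unfolding trans_matrix_def using P_kernel
  by (intro sum_nonneg mult_nonneg_nonneg joint_prob_nonneg) auto

lemma sum_trans_matrix:
  assumes "\<pi> \<in> joint_policies A"
  shows "(\<Sum>s'\<in>UNIV. trans_matrix \<pi> s s') = 1"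
proof -
  have "(\<Sum>s'\<in>UNIV. trans_matrix \<pi> s s') = (\<Sum>b\<in>joint_actions A. joint_prob \<pi> s b * (\<Sum>s'\<in>UNIV. P s b s'))"
    unfolding trans_matrix_def by (subst sum.swap) (simp add: sum_distrib_left)
  thus ?thesis
    using P_kernel sum_joint_prob[OF assms] by simp
qed

lemma row_sums_le_trans_matrix:
  "\<pi> \<in> joint_policies A \<Longrightarrow> row_sums_le (trans_matrix \<pi>) 1"
  unfolding row_sums_le_def by (simp add: trans_matrix_nonneg sum_trans_matrix)

lemma trans_matrix_fun_upd:
  "trans_matrix (\<pi>(i := p)) s s' = (\<Sum>a\<in>A i. p s a * agent_kernel \<pi> i s a s')"
proof -
  have joint_prob: "joint_prob (\<pi>(i := p)) s b = p s (b i) * (\<Prod>j\<in>UNIV - {i}. \<pi> j s (b j))" for b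
    unfolding joint_prob_def by (subst prod.remove[of UNIV i]) (auto intro!: prod.cong)
  have "trans_matrix (\<pi>(i := p)) s s'
      = (\<Sum>a\<in>A i. \<Sum>b\<in>{b\<in>joint_actions A. b i = a}. p s (b i) * ((\<Prod>j\<in>UNIV - {i}. \<pi> j s (b j)) * P s b s'))"
    unfolding trans_matrix_def joint_prob mult.assoc
    by (rule sum.group[symmetric]) (auto simp: joint_actions_def PiE_iff)
  also have "\<dots> = (\<Sum>a\<in>A i. p s a * agent_kernel \<pi> i s a s')"
    unfolding agent_kernel_def by (auto simp: sum_distrib_left intro!: sum.cong)
  finally show ?thesis .
qed

lemma trans_matrix_fun_upd_diff:
  "trans_matrix (\<pi>(i := p)) s s' - trans_matrix \<pi> s s' = (\<Sum>a\<in>A i. (p s a - \<pi> i s a) * agent_kernel \<pi> i s a s')"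
  using trans_matrix_fun_upd[of \<pi> i p] trans_matrix_fun_upd[of \<pi> i "\<pi> i"]
  by (simp add: sum_subtractf left_diff_distrib)

lemma state_dist_eq_funpow: "state_dist A P \<rho> \<pi> n = ((\<lambda>y. row_mult y (trans_matrix \<pi>)) ^^ n) \<rho>"
  by (induction n) (simp_all add: row_mult_def trans_matrix_def sum_distrib_left mult.assoc)

lemma occ_eq_visits: "occ \<pi> s = (1 - \<gamma>) * visits \<pi> s"
  unfolding occ_state_def visits_def row_resolvent_def state_dist_eq_funpow ..

lemma occ_vector_eq:
  assumes "row_sums_le (trans_matrix \<pi>) K" "\<gamma> * K < 1"
  shows "occ_vector \<pi> = (\<chi> x. case x of (j, s, a) \<Rightarrow> (1 - \<gamma>) * visits \<pi> s * \<pi> j s a)"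
proof -
  have "summable (\<lambda>n. \<gamma> ^ n * state_dist A P \<mu> \<pi> n s)" for s
    unfolding state_dist_eq_funpow using gamma_pos assms by (intro summable_row_resolvent) auto
  hence "occ_agent A P \<gamma> \<mu> \<pi> j s a = (1 - \<gamma>) * visits \<pi> s * \<pi> j s a" for j s a
    unfolding occ_agent_def visits_def row_resolvent_def state_dist_eq_funpow[symmetric]
    by (simp add: suminf_mult2 mult.assoc)
  thus ?thesis
    unfolding occ_vec_def by (simp add: vec_eq_iff split: prod.splits)
qed

lemma occ_vector_eq_visits:
  "\<pi> \<in> joint_policies A \<Longrightarrow> occ_vector \<pi> = (\<chi> x. case x of (j, s, a) \<Rightarrow> (1 - \<gamma>) * visits \<pi> s * \<pi> j s a)"
  using row_sums_le_trans_matrix gamma_less_1 by (intro occ_vector_eq) auto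

lemma visits_fixpoint:
  "\<pi> \<in> joint_policies A \<Longrightarrow> visits \<pi> s' = \<mu> s' + \<gamma> * row_mult (visits \<pi>) (trans_matrix \<pi>) s'"
  unfolding visits_def using row_sums_le_trans_matrix gamma_pos gamma_less_1
  by (intro row_resolvent_fixpoint) auto

lemma visits_nonneg:
  assumes "\<pi> \<in> joint_policies A"
  shows "0 \<le> visits \<pi> s"
proof -
  have "0 \<le> ((\<lambda>y. row_mult y (trans_matrix \<pi>)) ^^ n) \<mu> s" for n s
    using mu_dist trans_matrix_nonneg[OF assms]
    by (induction n arbitrary: s) (auto simp: row_mult_def intro!: sum_nonneg)
  thus ?thesis
    unfolding visits_def row_resolvent_def using gamma_pos gamma_less_1
    by (intro suminf_nonneg summable_row_resolvent[OF row_sums_le_trans_matrix[OF assms]]) auto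
qed

lemma sum_visits:
  assumes "\<pi> \<in> joint_policies A"
  shows "(\<Sum>s\<in>UNIV. visits \<pi> s) = 1 / (1 - \<gamma>)"
proof -
  have "(\<Sum>s\<in>UNIV. visits \<pi> s) = (\<Sum>s\<in>UNIV. \<mu> s + \<gamma> * row_mult (visits \<pi>) (trans_matrix \<pi>) s)"
    by (rule sum.cong[OF refl visits_fixpoint[OF assms]])
  also have "\<dots> = 1 + \<gamma> * (\<Sum>s\<in>UNIV. visits \<pi> s * col_mult (trans_matrix \<pi>) (\<lambda>_. 1) s)"
    using sum_row_mult_mult[of "visits \<pi>" "trans_matrix \<pi>" "\<lambda>_. 1"] mu_dist
    by (simp add: sum.distrib sum_distrib_left[symmetric])
  also have "\<dots> = 1 + \<gamma> * (\<Sum>s\<in>UNIV. visits \<pi> s)"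
    by (simp add: col_mult_def sum_trans_matrix[OF assms])
  finally show ?thesis
    using gamma_less_1 by (simp add: field_simps)
qed

lemma occ_vector_in_lam_set:
  assumes "\<pi> \<in> joint_policies A"
  shows "occ_vector \<pi> \<in> lam_set A"
proof -
  have "(\<Sum>s\<in>UNIV. \<Sum>a\<in>A j. (1 - \<gamma>) * visits \<pi> s * \<pi> j s a) = 1" for j
    using sum_visits[OF assms] joint_policiesD(3)[OF assms] gamma_less_1
    by (simp add: sum_distrib_left[symmetric])
  thus ?thesis
    unfolding lam_set_def occ_vector_eq_visits[OF assms]
    using joint_policiesD(1,2)[OF assms] visits_nonneg[OF assms] gamma_less_1 by auto
qed

lemma occ_le_1:
  assumes "\<pi> \<in> joint_policies A"
  shows "occ \<pi> s \<le> 1"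
proof -
  have "visits \<pi> s \<le> (\<Sum>s\<in>UNIV. visits \<pi> s)"
    using visits_nonneg[OF assms] by (intro member_le_sum) auto
  thus ?thesis
    unfolding occ_eq_visits sum_visits[OF assms] using gamma_less_1 by (simp add: field_simps)
qed

lemma visits_diff_bound:
  assumes "\<pi> \<in> joint_policies A" "\<pi>' \<in> joint_policies A"
  shows "\<bar>visits \<pi>' s - visits \<pi> s\<bar>
    \<le> \<gamma> / (1 - \<gamma>) * l1_norm (row_mult (visits \<pi>) (\<lambda>s s'. trans_matrix \<pi>' s s' - trans_matrix \<pi> s s'))"
proof -
  let ?Z = "\<lambda>s. visits \<pi>' s - visits \<pi> s"
  let ?D = "row_mult (visits \<pi>) (\<lambda>s s'. trans_matrix \<pi>' s s' - trans_matrix \<pi> s s')"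
  have "row_mult (visits \<pi>') (trans_matrix \<pi>') s' - row_mult (visits \<pi>) (trans_matrix \<pi>) s'
      = ?D s' + row_mult ?Z (trans_matrix \<pi>') s'" for s'
    by (simp add: row_mult_def left_diff_distrib right_diff_distrib sum_subtractf)
  hence "?Z s' = \<gamma> * ?D s' + \<gamma> * row_mult ?Z (trans_matrix \<pi>') s'" for s'
    using visits_fixpoint[OF assms(1), of s'] visits_fixpoint[OF assms(2), of s']
    by (simp add: algebra_simps)
  from l1_norm_le_of_row_fixpoint[OF row_sums_le_trans_matrix[OF assms(2)] _ _ this]
  have "l1_norm ?Z \<le> l1_norm (\<lambda>s. \<gamma> * ?D s) / (1 - \<gamma>)"
    using gamma_pos gamma_less_1 by simp
  thus ?thesis
    using abs_le_l1_norm[of ?Z s] gamma_pos by (simp add: l1_norm_scale)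
qed

lemma continuous_on_trans_matrix:
  "continuous_on S (\<lambda>x. trans_matrix (policy_of_vec x) s s')"
  unfolding trans_matrix_def joint_prob_def policy_of_vec_def
  by (intro continuous_on_sum continuous_on_mult continuous_on_prod continuous_on_const
      continuous_on_component continuous_on_id)

lemma continuous_on_visits:
  "continuous_on (joint_policy_vecs A) (\<lambda>x. visits (policy_of_vec x) s)"
  unfolding continuous_on_def
proof (intro ballI)
  fix x0 :: "real ^ ('i \<times> 's \<times> 'a)" assume x0: "x0 \<in> joint_policy_vecs A"
  define bound where "bound x = \<gamma> / (1 - \<gamma>) * l1_norm (row_mult (visits (policy_of_vec x0))
    (\<lambda>s s'. trans_matrix (policy_of_vec x) s s' - trans_matrix (policy_of_vec x0) s s'))" for x
  have "continuous_on (joint_policy_vecs A) bound"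
    unfolding bound_def l1_norm_def row_mult_def
    by (intro continuous_on_mult continuous_on_const continuous_on_sum continuous_on_rabs
        continuous_on_diff continuous_on_trans_matrix)
  hence "(bound \<longlongrightarrow> bound x0) (at x0 within joint_policy_vecs A)"
    using x0 unfolding continuous_on_def by blast
  moreover have "bound x0 = 0"
    by (simp add: bound_def l1_norm_def row_mult_def)
  ultimately have bound: "(bound \<longlongrightarrow> 0) (at x0 within joint_policy_vecs A)"
    by simp
  have "norm (visits (policy_of_vec x) s - visits (policy_of_vec x0) s) \<le> bound x"
    if "x \<in> joint_policy_vecs A" for x
    using visits_diff_bound[of "policy_of_vec x0" "policy_of_vec x" s] x0 that
    unfolding joint_policy_vecs_def bound_def by simp
  hence "eventually (\<lambda>x. norm (visits (policy_of_vec x) s - visits (policy_of_vec x0) s) \<le> bound x)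
      (at x0 within joint_policy_vecs A)"
    by (auto simp: eventually_at_filter intro: always_eventually)
  from Lim_null_comparison[OF this bound]
  have "((\<lambda>x. visits (policy_of_vec x) s - visits (policy_of_vec x0) s) \<longlongrightarrow> 0)
      (at x0 within joint_policy_vecs A)" .
  thus "((\<lambda>x. visits (policy_of_vec x) s) \<longlongrightarrow> visits (policy_of_vec x0) s) (at x0 within joint_policy_vecs A)"
    by (rule LIM_zero_cancel)
qed

lemma continuous_on_occ_vector:
  "continuous_on (joint_policy_vecs A) (\<lambda>x. occ_vector (policy_of_vec x))"
proof (rule continuous_on_eq)
  show "continuous_on (joint_policy_vecs A)
      (\<lambda>x. \<chi> k. (1 - \<gamma>) * visits (policy_of_vec x) (fst (snd k)) * x $ k)"
    by (intro continuous_on_vec_lambda continuous_on_mult continuous_on_const continuous_on_visits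
        continuous_on_component continuous_on_id)
  show "(\<chi> k. (1 - \<gamma>) * visits (policy_of_vec x) (fst (snd k)) * x $ k) = occ_vector (policy_of_vec x)"
    if "x \<in> joint_policy_vecs A" for x
    using that unfolding joint_policy_vecs_def
    by (simp add: occ_vector_eq_visits vec_eq_iff policy_of_vec_def split: prod.splits)
qed

lemma col_mult_trans_matrix_fun_upd_diff:
  "col_mult (trans_matrix (\<pi>(i := p))) v s - col_mult (trans_matrix \<pi>) v s
   = (\<Sum>a\<in>A i. (p s a - \<pi> i s a) * (\<Sum>s'\<in>UNIV. agent_kernel \<pi> i s a s' * v s'))"
proof -
  have "col_mult (trans_matrix (\<pi>(i := p))) v s - col_mult (trans_matrix \<pi>) v s
      = (\<Sum>s'\<in>UNIV. \<Sum>a\<in>A i. (p s a - \<pi> i s a) * agent_kernel \<pi> i s a s' * v s')"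
    unfolding col_mult_def sum_subtractf[symmetric] left_diff_distrib[symmetric]
      trans_matrix_fun_upd_diff sum_distrib_right ..
  also have "\<dots> = (\<Sum>a\<in>A i. (p s a - \<pi> i s a) * (\<Sum>s'\<in>UNIV. agent_kernel \<pi> i s a s' * v s'))"
    by (subst sum.swap) (simp add: sum_distrib_left mult.assoc)
  finally show ?thesis .
qed

lemma trans_matrix_coordinate_shift:
  assumes "a0 \<in> A i"
  shows "trans_matrix (\<pi>(i := (\<pi> i)(s0 := (\<pi> i s0)(a0 := \<pi> i s0 a0 + t)))) s s'
    = trans_matrix \<pi> s s' + t * (if s = s0 then agent_kernel \<pi> i s0 a0 s' else 0)"
proof -
  have "trans_matrix (\<pi>(i := (\<pi> i)(s0 := (\<pi> i s0)(a0 := \<pi> i s0 a0 + t)))) s s' - trans_matrix \<pi> s s'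
      = (\<Sum>a\<in>A i. if a = a0 then (if s = s0 then t * agent_kernel \<pi> i s0 a0 s' else 0) else 0)"
    unfolding trans_matrix_fun_upd_diff by (intro sum.cong) auto
  thus ?thesis
    using assms by (simp add: algebra_simps)
qed

text \<open>For \<open>t \<noteq> 0\<close> the shifted \<open>\<pi>\<close> is no longer a policy, which is why \<open>occ_vector_eq\<close> only
  asks for a row-sum bound.\<close>
lemma eventually_occ_vector_coordinate_shift:
  fixes \<pi> i s0 a0
  defines "R \<equiv> row_resolvent \<gamma> (trans_matrix \<pi>) (agent_kernel \<pi> i s0 a0)"
  assumes \<pi>: "\<pi> \<in> joint_policies A" and a0: "a0 \<in> A i"
  shows "\<forall>\<^sub>F t in nhds 0. occ_vector (\<pi>(i := (\<pi> i)(s0 := (\<pi> i s0)(a0 := \<pi> i s0 a0 + t)))) =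
    (\<chi> x. case x of (j, s, a) \<Rightarrow> (1 - \<gamma>) * (visits \<pi> s + \<gamma> * t * visits \<pi> s0 / (1 - \<gamma> * t * R s0) * R s)
      * (\<pi> j s a + (if (j, s, a) = (i, s0, a0) then t else 0)))"
proof -
  let ?C = "l1_norm (agent_kernel \<pi> i s0 a0)"
  have "((\<lambda>t. \<gamma> * (1 + \<bar>t\<bar> * ?C)) \<longlongrightarrow> \<gamma> * (1 + \<bar>0\<bar> * ?C)) (nhds 0)"
    and "((\<lambda>t. \<gamma> * t * R s0) \<longlongrightarrow> \<gamma> * 0 * R s0) (nhds 0)"
    by (intro tendsto_intros filterlim_ident)+
  hence "\<forall>\<^sub>F t in nhds 0. \<gamma> * (1 + \<bar>t\<bar> * ?C) < 1" and "\<forall>\<^sub>F t in nhds 0. \<gamma> * t * R s0 < 1"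
    using gamma_less_1 by (auto intro: order_tendstoD(2))
  hence "\<forall>\<^sub>F t in nhds 0. \<gamma> * (1 + \<bar>t\<bar> * ?C) < 1 \<and> \<gamma> * t * R s0 < 1"
    by (rule eventually_conj)
  thus ?thesis
  proof eventually_elim
    case (elim t)
    let ?\<pi>\<^sub>t = "\<pi>(i := (\<pi> i)(s0 := (\<pi> i s0)(a0 := \<pi> i s0 a0 + t)))"
    have M: "trans_matrix ?\<pi>\<^sub>t = (\<lambda>s s'. trans_matrix \<pi> s s' + t * (if s = s0 then agent_kernel \<pi> i s0 a0 s' else 0))"
      using trans_matrix_coordinate_shift[OF a0] by (intro ext)
    have bound: "row_sums_le (trans_matrix ?\<pi>\<^sub>t) (1 + \<bar>t\<bar> * ?C)"
      unfolding M by (rule row_sums_le_rank_one_update[OF row_sums_le_trans_matrix[OF \<pi>]])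
    have "visits ?\<pi>\<^sub>t = (\<lambda>s. visits \<pi> s + \<gamma> * t * visits \<pi> s0 / (1 - \<gamma> * t * R s0) * R s)"
      unfolding visits_def M R_def using elim gamma_pos
      by (intro row_resolvent_rank_one_update[OF row_sums_le_trans_matrix[OF \<pi>]]) (auto simp: R_def)
    thus ?case
      using occ_vector_eq[OF bound] elim by (simp add: vec_eq_iff split: prod.split)
  qed
qed

lemma has_vector_derivative_occ_vector_coordinate_shift:
  fixes \<pi> i s0 a0
  defines "R \<equiv> row_resolvent \<gamma> (trans_matrix \<pi>) (agent_kernel \<pi> i s0 a0)"
  assumes \<pi>: "\<pi> \<in> joint_policies A" and a0: "a0 \<in> A i"
  shows "((\<lambda>t. occ_vector (\<pi>(i := (\<pi> i)(s0 := (\<pi> i s0)(a0 := \<pi> i s0 a0 + t))))) has_vector_derivative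
      ((1 - \<gamma>) * \<gamma> * visits \<pi> s0) *\<^sub>R (\<chi> x. case x of (j, s, a) \<Rightarrow> R s * \<pi> j s a)
      + ((1 - \<gamma>) * visits \<pi> s0) *\<^sub>R axis (i, s0, a0) 1) (at 0)"
proof -
  define k where "k t = \<gamma> * t * visits \<pi> s0 / (1 - \<gamma> * t * R s0)" for t
  define \<Phi> where "\<Phi> t = (\<chi> x. case x of (j, s, a) \<Rightarrow>
    (1 - \<gamma>) * (visits \<pi> s + k t * R s) * (\<pi> j s a + (if (j, s, a) = (i, s0, a0) then t else 0)))" for t
  have occ: "\<forall>\<^sub>F t in nhds 0. occ_vector (\<pi>(i := (\<pi> i)(s0 := (\<pi> i s0)(a0 := \<pi> i s0 a0 + t)))) = \<Phi> t"
    using eventually_occ_vector_coordinate_shift[OF \<pi> a0, of s0]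
    unfolding \<Phi>_def k_def R_def .
  have k: "(k has_real_derivative \<gamma> * visits \<pi> s0) (at 0)"
    unfolding k_def by (auto intro!: derivative_eq_intros)
  have "(\<Phi> has_vector_derivative (\<chi> x. case x of (j, s, a) \<Rightarrow>
      (1 - \<gamma>) * (\<gamma> * visits \<pi> s0 * R s * \<pi> j s a + visits \<pi> s * (if (j, s, a) = (i, s0, a0) then 1 else 0)))) (at 0)"
    unfolding \<Phi>_def
  proof (rule has_vector_derivative_vec_lambda)
    fix x :: "'i \<times> 's \<times> 'a"
    obtain j s a where x: "x = (j, s, a)" by (cases x)
    show "((\<lambda>t. case x of (j, s, a) \<Rightarrow>
        (1 - \<gamma>) * (visits \<pi> s + k t * R s) * (\<pi> j s a + (if (j, s, a) = (i, s0, a0) then t else 0)))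
      has_real_derivative (case x of (j, s, a) \<Rightarrow>
        (1 - \<gamma>) * (\<gamma> * visits \<pi> s0 * R s * \<pi> j s a + visits \<pi> s * (if (j, s, a) = (i, s0, a0) then 1 else 0)))) (at 0)"
      unfolding x using k by (auto intro!: derivative_eq_intros simp: k_def) (simp_all add: algebra_simps)
  qed
  also have "(\<chi> x. case x of (j, s, a) \<Rightarrow>
      (1 - \<gamma>) * (\<gamma> * visits \<pi> s0 * R s * \<pi> j s a + visits \<pi> s * (if (j, s, a) = (i, s0, a0) then 1 else 0)))
    = ((1 - \<gamma>) * \<gamma> * visits \<pi> s0) *\<^sub>R (\<chi> x. case x of (j, s, a) \<Rightarrow> R s * \<pi> j s a)
      + ((1 - \<gamma>) * visits \<pi> s0) *\<^sub>R axis (i, s0, a0) 1"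
    by (auto simp: vec_eq_iff axis_def algebra_simps split: prod.split)
  finally have \<Phi>: "(\<Phi> has_vector_derivative ((1 - \<gamma>) * \<gamma> * visits \<pi> s0) *\<^sub>R (\<chi> x. case x of (j, s, a) \<Rightarrow> R s * \<pi> j s a)
      + ((1 - \<gamma>) * visits \<pi> s0) *\<^sub>R axis (i, s0, a0) 1) (at 0)" .
  have ev: "\<forall>\<^sub>F t in nhds 0. t \<in> UNIV \<longrightarrow> occ_vector (\<pi>(i := (\<pi> i)(s0 := (\<pi> i s0)(a0 := \<pi> i s0 a0 + t)))) = \<Phi> t"
    using occ by simp
  show ?thesis
    using \<Phi> by (rule has_vector_derivative_cong_ev[OF ev eventually_nhds_x_imp_x[OF occ], THEN iffD2])
qed

lemma trans_matrix_segment_diff: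
  "trans_matrix (\<pi>(i := \<lambda>s a. \<pi> i s a + t * (p s a - \<pi> i s a))) s s' - trans_matrix \<pi> s s'
   = t * (trans_matrix (\<pi>(i := p)) s s' - trans_matrix \<pi> s s')"
  unfolding trans_matrix_fun_upd_diff by (simp add: sum_distrib_left mult_ac)

lemma visits_segment_bound:
  assumes \<pi>: "\<pi> \<in> joint_policies A" and p: "p \<in> policy_set A i" and t: "0 \<le> t" "t \<le> 1"
  shows "\<bar>visits (\<pi>(i := \<lambda>s a. \<pi> i s a + t * (p s a - \<pi> i s a))) s - visits \<pi> s\<bar>
    \<le> t * (\<gamma> / (1 - \<gamma>) * l1_norm (row_mult (visits \<pi>) (\<lambda>s s'. trans_matrix (\<pi>(i := p)) s s' - trans_matrix \<pi> s s')))"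
proof -
  have "\<pi> i \<in> policy_set A i"
    using \<pi> unfolding joint_policies_def by simp
  hence "\<pi>(i := \<lambda>s a. \<pi> i s a + t * (p s a - \<pi> i s a)) \<in> joint_policies A"
    using \<pi> p t by (intro fun_upd_in_joint_policies segment_in_policy_set)
  hence "\<bar>visits (\<pi>(i := \<lambda>s a. \<pi> i s a + t * (p s a - \<pi> i s a))) s - visits \<pi> s\<bar>
      \<le> \<gamma> / (1 - \<gamma>) * l1_norm (row_mult (visits \<pi>)
        (\<lambda>s s'. trans_matrix (\<pi>(i := \<lambda>s a. \<pi> i s a + t * (p s a - \<pi> i s a))) s s' - trans_matrix \<pi> s s'))"
    by (rule visits_diff_bound[OF \<pi>])
  also have "row_mult (visits \<pi>) (\<lambda>s s'. trans_matrix (\<pi>(i := \<lambda>s a. \<pi> i s a + t * (p s a - \<pi> i s a))) s s' - trans_matrix \<pi> s s')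
      = (\<lambda>s'. t * row_mult (visits \<pi>) (\<lambda>s s'. trans_matrix (\<pi>(i := p)) s s' - trans_matrix \<pi> s s') s')"
    unfolding trans_matrix_segment_diff by (simp add: row_mult_def sum_distrib_left mult_ac fun_eq_iff)
  also have "\<gamma> / (1 - \<gamma>) * l1_norm \<dots>
      = t * (\<gamma> / (1 - \<gamma>) * l1_norm (row_mult (visits \<pi>) (\<lambda>s s'. trans_matrix (\<pi>(i := p)) s s' - trans_matrix \<pi> s s')))"
    using t by (simp add: l1_norm_scale)
  finally show ?thesis .
qed

lemma occ_vector_segment_lipschitz:
  assumes \<pi>: "\<pi> \<in> joint_policies A" and p: "p \<in> policy_set A i"
  obtains B where "\<And>t. 0 \<le> t \<Longrightarrow> t \<le> 1 \<Longrightarrow>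
    norm (occ_vector (\<pi>(i := \<lambda>s a. \<pi> i s a + t * (p s a - \<pi> i s a))) - occ_vector \<pi>) \<le> B * t"
proof -
  define c where "c = \<gamma> / (1 - \<gamma>) * l1_norm (row_mult (visits \<pi>) (\<lambda>s s'. trans_matrix (\<pi>(i := p)) s s' - trans_matrix \<pi> s s'))"
  define b where "b x = (case x of (j :: 'i, s, a) \<Rightarrow> (1 - \<gamma>) * (c + \<bar>visits \<pi> s\<bar> * \<bar>p s a - \<pi> i s a\<bar>))" for x
  have "norm (occ_vector (\<pi>(i := \<lambda>s a. \<pi> i s a + t * (p s a - \<pi> i s a))) - occ_vector \<pi>) \<le> (\<Sum>x\<in>UNIV. b x) * t"
    if t: "0 \<le> t" "t \<le> 1" for t
  proof -
    define \<pi>\<^sub>t where "\<pi>\<^sub>t = \<pi>(i := \<lambda>s a. \<pi> i s a + t * (p s a - \<pi> i s a))"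
    have "\<pi> i \<in> policy_set A i"
      using \<pi> unfolding joint_policies_def by simp
    hence \<pi>\<^sub>t: "\<pi>\<^sub>t \<in> joint_policies A"
      unfolding \<pi>\<^sub>t_def using \<pi> p t by (intro fun_upd_in_joint_policies segment_in_policy_set)
    have "\<bar>(occ_vector \<pi>\<^sub>t - occ_vector \<pi>) $ x\<bar> \<le> t * b x" for x
    proof -
      obtain j s a where x: "x = (j, s, a)" by (cases x)
      have \<pi>\<^sub>t_diff: "\<bar>\<pi>\<^sub>t j s a - \<pi> j s a\<bar> \<le> t * \<bar>p s a - \<pi> i s a\<bar>"
        unfolding \<pi>\<^sub>t_def using t by (cases "j = i") (auto simp: abs_mult)
      have "\<bar>visits \<pi>\<^sub>t s * \<pi>\<^sub>t j s a - visits \<pi> s * \<pi> j s a\<bar>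
          \<le> \<bar>visits \<pi>\<^sub>t s - visits \<pi> s\<bar> * \<bar>\<pi>\<^sub>t j s a\<bar> + \<bar>visits \<pi> s\<bar> * \<bar>\<pi>\<^sub>t j s a - \<pi> j s a\<bar>"
        unfolding abs_mult[symmetric] by (rule order_trans[OF _ abs_triangle_ineq]) (simp add: algebra_simps)
      also have "\<dots> \<le> t * c * 1 + \<bar>visits \<pi> s\<bar> * (t * \<bar>p s a - \<pi> i s a\<bar>)"
        using visits_segment_bound[OF \<pi> p t, of s] abs_policy_le_1[OF \<pi>\<^sub>t, of j s a] \<pi>\<^sub>t_diff t
        unfolding c_def \<pi>\<^sub>t_def by (intro add_mono mult_mono mult_left_mono) auto
      finally have diff: "\<bar>visits \<pi>\<^sub>t s * \<pi>\<^sub>t j s a - visits \<pi> s * \<pi> j s a\<bar>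
          \<le> t * (c + \<bar>visits \<pi> s\<bar> * \<bar>p s a - \<pi> i s a\<bar>)"
        by (simp add: algebra_simps)
      have "(occ_vector \<pi>\<^sub>t - occ_vector \<pi>) $ x = (1 - \<gamma>) * (visits \<pi>\<^sub>t s * \<pi>\<^sub>t j s a - visits \<pi> s * \<pi> j s a)"
        unfolding x occ_vector_eq_visits[OF \<pi>\<^sub>t] occ_vector_eq_visits[OF \<pi>] by (simp add: algebra_simps)
      thus ?thesis
        using mult_left_mono[OF diff, of "1 - \<gamma>"] gamma_less_1 unfolding b_def x
        by (simp add: abs_mult mult_ac)
    qed
    thus ?thesis
      unfolding \<pi>\<^sub>t_def by (rule norm_le_of_abs_components_le)
  qed
  thus ?thesis
    using that by blast
qed

lemma occ_segment_tendsto: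
  assumes \<pi>: "\<pi> \<in> joint_policies A" and p: "p \<in> policy_set A i"
  shows "((\<lambda>t. occ (\<pi>(i := \<lambda>s a. \<pi> i s a + t * (p s a - \<pi> i s a))) s) \<longlongrightarrow> occ \<pi> s) (at_right 0)"
proof -
  have "\<forall>\<^sub>F t in at_right 0. norm (visits (\<pi>(i := \<lambda>s a. \<pi> i s a + t * (p s a - \<pi> i s a))) s - visits \<pi> s)
    \<le> \<gamma> / (1 - \<gamma>) * l1_norm (row_mult (visits \<pi>) (\<lambda>s s'. trans_matrix (\<pi>(i := p)) s s' - trans_matrix \<pi> s s')) * t"
    using eventually_at_right_real[OF zero_less_one]
    by eventually_elim (use visits_segment_bound[OF \<pi> p] in \<open>auto simp: mult.commute\<close>)
  hence "((\<lambda>t. visits (\<pi>(i := \<lambda>s a. \<pi> i s a + t * (p s a - \<pi> i s a))) s) \<longlongrightarrow> visits \<pi> s) (at_right 0)"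
    by (rule tendsto_at_right_0_of_lipschitz)
  thus ?thesis
    unfolding occ_eq_visits by (intro tendsto_intros)
qed

end

section \<open>Linearised utilities and the pseudo-gradient\<close>

locale general_utility_markov_game = discounted_markov_game A P \<mu> \<gamma>
  for A :: "'i::finite \<Rightarrow> 'a::finite set"
    and P :: "'s::finite \<Rightarrow> ('i \<Rightarrow> 'a) \<Rightarrow> 's \<Rightarrow> real"
    and \<mu> \<gamma> +
  fixes F :: "'i \<Rightarrow> ((real ^ ('i \<times> 's \<times> 'a)) \<times> (real ^ ('i \<times> 's \<times> 'a))) \<Rightarrow> real"
  assumes F_differentiable:
      "\<forall>i. \<forall>l\<in>lam_set A. \<forall>\<pi>\<in>joint_policies A. F i differentiable (at (l, minus_vec \<pi> i))"
    and F_concave: "\<forall>i. \<forall>\<pi>\<in>joint_policies A. concave_on (lam_set A) (\<lambda>l. F i (l, minus_vec \<pi> i))"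
    and occ_pos: "\<forall>\<pi>\<in>joint_policies A. \<forall>s. 0 < occ_state A P \<gamma> \<mu> \<pi> s"
begin

abbreviation util :: "'i \<Rightarrow> ('i \<Rightarrow> 's \<Rightarrow> 'a \<Rightarrow> real) \<Rightarrow> real" where
  "util \<equiv> utility A P \<gamma> \<mu> F"

definition DF :: "('i \<Rightarrow> 's \<Rightarrow> 'a \<Rightarrow> real) \<Rightarrow> 'i \<Rightarrow> (real ^ ('i \<times> 's \<times> 'a)) \<times> (real ^ ('i \<times> 's \<times> 'a)) \<Rightarrow> real" where
  "DF \<pi> i = (SOME D. (F i has_derivative D) (at (occ_vector \<pi>, minus_vec \<pi> i)))"

text \<open>Linearising \<open>F i\<close> at the occupancy of \<open>\<pi>\<close> yields an ordinary discounted MDP whose reward is the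
  partial gradient of \<open>F i\<close> in the occupancy; all quantities below are those of this MDP.\<close>

definition reward :: "('i \<Rightarrow> 's \<Rightarrow> 'a \<Rightarrow> real) \<Rightarrow> 'i \<Rightarrow> 'i \<times> 's \<times> 'a \<Rightarrow> real" where
  "reward \<pi> i x = DF \<pi> i (axis x 1, 0)"

definition expected_reward :: "('i \<Rightarrow> 's \<Rightarrow> 'a \<Rightarrow> real) \<Rightarrow> 'i \<Rightarrow> ('i \<Rightarrow> 's \<Rightarrow> 'a \<Rightarrow> real) \<Rightarrow> 's \<Rightarrow> real" where
  "expected_reward \<pi> i \<sigma> s = (\<Sum>j\<in>UNIV. \<Sum>a\<in>UNIV. reward \<pi> i (j, s, a) * \<sigma> j s a)"

definition state_value :: "('i \<Rightarrow> 's \<Rightarrow> 'a \<Rightarrow> real) \<Rightarrow> 'i \<Rightarrow> 's \<Rightarrow> real" where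
  "state_value \<pi> i = col_resolvent \<gamma> (trans_matrix \<pi>) (expected_reward \<pi> i \<pi>)"

definition q_value :: "('i \<Rightarrow> 's \<Rightarrow> 'a \<Rightarrow> real) \<Rightarrow> 'i \<Rightarrow> 's \<Rightarrow> 'a \<Rightarrow> real" where
  "q_value \<pi> i s a = reward \<pi> i (i, s, a) + \<gamma> * (\<Sum>s'\<in>UNIV. agent_kernel \<pi> i s a s' * state_value \<pi> i s')"

definition advantage :: "('i \<Rightarrow> 's \<Rightarrow> 'a \<Rightarrow> real) \<Rightarrow> 'i \<Rightarrow> ('s \<Rightarrow> 'a \<Rightarrow> real) \<Rightarrow> 's \<Rightarrow> real" where
  "advantage \<pi> i p s = (\<Sum>a\<in>A i. (p s a - \<pi> i s a) * q_value \<pi> i s a)"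

lemma DF_has_derivative:
  assumes "\<pi> \<in> joint_policies A"
  shows "(F i has_derivative DF \<pi> i) (at (occ_vector \<pi>, minus_vec \<pi> i))"
proof -
  have "F i differentiable (at (occ_vector \<pi>, minus_vec \<pi> i))"
    using F_differentiable occ_vector_in_lam_set[OF assms] assms by blast
  thus ?thesis
    unfolding DF_def differentiable_def by (rule someI_ex)
qed

lemma linear_DF_fst: "\<pi> \<in> joint_policies A \<Longrightarrow> linear (\<lambda>h. DF \<pi> i (h, 0))"
  by (rule linear_has_derivative_fst[OF DF_has_derivative])

lemma DF_fst_eq_sum_reward:
  "\<pi> \<in> joint_policies A \<Longrightarrow> DF \<pi> i (h, 0) = (\<Sum>x\<in>UNIV. h $ x * reward \<pi> i x)"
  unfolding reward_def by (rule linear_eq_sum_axis[OF linear_DF_fst])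

lemma DF_fst_occupancy_form:
  "\<pi> \<in> joint_policies A \<Longrightarrow>
    DF \<pi> i (\<chi> x. case x of (j, s, a) \<Rightarrow> X s * \<sigma> j s a, 0) = (\<Sum>s\<in>UNIV. X s * expected_reward \<pi> i \<sigma> s)"
  unfolding DF_fst_eq_sum_reward sum_UNIV_triple expected_reward_def
  by (subst sum.swap) (simp add: sum_distrib_left mult_ac)

lemma DF_fst_occ_vector:
  "\<pi> \<in> joint_policies A \<Longrightarrow> \<sigma> \<in> joint_policies A \<Longrightarrow>
    DF \<pi> i (occ_vector \<sigma>, 0) = (\<Sum>s\<in>UNIV. occ \<sigma> s * expected_reward \<pi> i \<sigma> s)"
  unfolding occ_vector_eq_visits DF_fst_occupancy_form occ_eq_visits by (simp add: mult.assoc)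

lemma state_value_fixpoint:
  "\<pi> \<in> joint_policies A \<Longrightarrow>
    state_value \<pi> i s = expected_reward \<pi> i \<pi> s + \<gamma> * col_mult (trans_matrix \<pi>) (state_value \<pi> i) s"
  unfolding state_value_def using row_sums_le_trans_matrix gamma_pos gamma_less_1
  by (intro col_resolvent_fixpoint) auto

lemma expected_reward_fun_upd_diff:
  assumes "\<pi> \<in> joint_policies A" "p \<in> policy_set A i"
  shows "expected_reward \<pi> i (\<pi>(i := p)) s - expected_reward \<pi> i \<pi> s
    = (\<Sum>a\<in>A i. (p s a - \<pi> i s a) * reward \<pi> i (i, s, a))"
proof -
  have "expected_reward \<pi> i (\<pi>(i := p)) s - expected_reward \<pi> i \<pi> s
      = (\<Sum>a\<in>UNIV. (p s a - \<pi> i s a) * reward \<pi> i (i, s, a))"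
    unfolding expected_reward_def sum_subtractf[symmetric] right_diff_distrib[symmetric]
    by (subst sum.remove[of UNIV i]) (auto simp: mult.commute)
  also have "\<dots> = (\<Sum>a\<in>A i. (p s a - \<pi> i s a) * reward \<pi> i (i, s, a))"
    using assms joint_policiesD(2)[OF assms(1)] unfolding policy_set_def
    by (intro sum.mono_neutral_right) auto
  finally show ?thesis .
qed

lemma advantage_eq_bellman_residual:
  assumes "\<pi> \<in> joint_policies A" "p \<in> policy_set A i"
  shows "expected_reward \<pi> i (\<pi>(i := p)) s - state_value \<pi> i s
      + \<gamma> * col_mult (trans_matrix (\<pi>(i := p))) (state_value \<pi> i) s = advantage \<pi> i p s"
proof -
  have "expected_reward \<pi> i (\<pi>(i := p)) s - state_value \<pi> i s
      + \<gamma> * col_mult (trans_matrix (\<pi>(i := p))) (state_value \<pi> i) s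
    = (expected_reward \<pi> i (\<pi>(i := p)) s - expected_reward \<pi> i \<pi> s)
      + \<gamma> * (col_mult (trans_matrix (\<pi>(i := p))) (state_value \<pi> i) s - col_mult (trans_matrix \<pi>) (state_value \<pi> i) s)"
    using state_value_fixpoint[OF assms(1), of i s] by (simp add: algebra_simps)
  also have "\<dots> = (\<Sum>a\<in>A i. (p s a - \<pi> i s a) * reward \<pi> i (i, s, a))
      + \<gamma> * (\<Sum>a\<in>A i. (p s a - \<pi> i s a) * (\<Sum>s'\<in>UNIV. agent_kernel \<pi> i s a s' * state_value \<pi> i s'))"
    unfolding expected_reward_fun_upd_diff[OF assms] col_mult_trans_matrix_fun_upd_diff ..
  also have "\<dots> = advantage \<pi> i p s"
    unfolding advantage_def q_value_def sum_distrib_left[of \<gamma> _ "A i"] sum.distrib[symmetric]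
    by (intro sum.cong refl) (simp add: algebra_simps)
  finally show ?thesis .
qed

lemma DF_performance_difference:
  assumes \<pi>: "\<pi> \<in> joint_policies A" and p: "p \<in> policy_set A i"
  shows "DF \<pi> i (occ_vector (\<pi>(i := p)), 0) - DF \<pi> i (occ_vector \<pi>, 0)
    = (\<Sum>s\<in>UNIV. occ (\<pi>(i := p)) s * advantage \<pi> i p s)"
proof -
  let ?\<pi>' = "\<pi>(i := p)" and ?V = "state_value \<pi> i"
  have \<pi>': "?\<pi>' \<in> joint_policies A"
    by (rule fun_upd_in_joint_policies[OF \<pi> p])
  have "(\<Sum>s\<in>UNIV. visits \<pi> s * expected_reward \<pi> i \<pi> s) = (\<Sum>s\<in>UNIV. \<mu> s * ?V s)"
    using sum_mult_row_fixpoint[OF visits_fixpoint[OF \<pi>], of ?V] state_value_fixpoint[OF \<pi>, of i]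
    by simp
  also have "\<dots> = (\<Sum>s\<in>UNIV. visits ?\<pi>' s * (?V s - \<gamma> * col_mult (trans_matrix ?\<pi>') ?V s))"
    by (rule sum_mult_row_fixpoint[OF visits_fixpoint[OF \<pi>']])
  finally have dual: "(\<Sum>s\<in>UNIV. visits \<pi> s * expected_reward \<pi> i \<pi> s)
      = (\<Sum>s\<in>UNIV. visits ?\<pi>' s * (?V s - \<gamma> * col_mult (trans_matrix ?\<pi>') ?V s))" .
  have "(\<Sum>s\<in>UNIV. visits ?\<pi>' s * expected_reward \<pi> i ?\<pi>' s) - (\<Sum>s\<in>UNIV. visits \<pi> s * expected_reward \<pi> i \<pi> s)
      = (\<Sum>s\<in>UNIV. visits ?\<pi>' s * (expected_reward \<pi> i ?\<pi>' s - (?V s - \<gamma> * col_mult (trans_matrix ?\<pi>') ?V s)))"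
    unfolding dual by (simp add: sum_subtractf right_diff_distrib)
  also have "\<dots> = (\<Sum>s\<in>UNIV. visits ?\<pi>' s * advantage \<pi> i p s)"
    by (intro sum.cong refl) (simp add: advantage_eq_bellman_residual[OF \<pi> p, symmetric])
  finally show ?thesis
    unfolding DF_fst_occ_vector[OF \<pi> \<pi>'] DF_fst_occ_vector[OF \<pi> \<pi>] occ_eq_visits
    by (simp add: sum_distrib_left[symmetric] right_diff_distrib[symmetric] mult.assoc)
qed

lemma utility_eq: "util i \<pi> = F i (occ_vector \<pi>, minus_vec \<pi> i)"
  unfolding utility_def ..

lemma has_derivative_F_fst:
  "\<pi> \<in> joint_policies A \<Longrightarrow>
    ((\<lambda>l. F i (l, minus_vec \<pi> i)) has_derivative (\<lambda>h. DF \<pi> i (h, 0))) (at (occ_vector \<pi>))"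
  using has_derivative_compose[OF has_derivative_Pair[OF has_derivative_ident has_derivative_const]
      DF_has_derivative] by simp

lemma pseudo_grad_eq:
  assumes \<pi>: "\<pi> \<in> joint_policies A" and a0: "a0 \<in> A i"
  shows "pseudo_grad A P \<gamma> \<mu> F \<pi> i s0 a0 = occ \<pi> s0 * q_value \<pi> i s0 a0"
proof -
  define R where "R = row_resolvent \<gamma> (trans_matrix \<pi>) (agent_kernel \<pi> i s0 a0)"
  define D where "D = ((1 - \<gamma>) * \<gamma> * visits \<pi> s0) *\<^sub>R (\<chi> x. case x of (j, s, a) \<Rightarrow> R s * \<pi> j s a)
    + ((1 - \<gamma>) * visits \<pi> s0) *\<^sub>R axis (i, s0, a0) 1"
  have "((\<lambda>t. (occ_vector (\<pi>(i := (\<pi> i)(s0 := (\<pi> i s0)(a0 := \<pi> i s0 a0 + t)))), minus_vec \<pi> i))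
      has_derivative (\<lambda>h. (h *\<^sub>R D, 0))) (at 0)"
    using has_vector_derivative_occ_vector_coordinate_shift[OF \<pi> a0, of s0]
    unfolding has_vector_derivative_def R_def D_def by (intro has_derivative_Pair has_derivative_const)
  hence "((\<lambda>t. util i (\<pi>(i := (\<pi> i)(s0 := (\<pi> i s0)(a0 := \<pi> i s0 a0 + t)))))
      has_derivative (\<lambda>h. DF \<pi> i (h *\<^sub>R D, 0))) (at 0)"
    unfolding utility_eq minus_vec_fun_upd
    by (rule has_derivative_compose) (simp add: DF_has_derivative[OF \<pi>])
  moreover have "(\<lambda>h. DF \<pi> i (h *\<^sub>R D, 0)) = (\<lambda>h. DF \<pi> i (D, 0) * h)"
    using linear_scale[OF linear_DF_fst[OF \<pi>]] by (auto simp: fun_eq_iff mult.commute)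
  ultimately have "pseudo_grad A P \<gamma> \<mu> F \<pi> i s0 a0 = DF \<pi> i (D, 0)"
    unfolding pseudo_grad_def by (intro DERIV_imp_deriv) (simp add: has_field_derivative_def)
  also have "\<dots> = (1 - \<gamma>) * visits \<pi> s0 * (\<gamma> * (\<Sum>s\<in>UNIV. R s * expected_reward \<pi> i \<pi> s) + reward \<pi> i (i, s0, a0))"
    unfolding D_def linear_add[OF linear_DF_fst[OF \<pi>]] linear_scale[OF linear_DF_fst[OF \<pi>]]
      DF_fst_occupancy_form[OF \<pi>] reward_def by (simp add: algebra_simps)
  also have "(\<Sum>s\<in>UNIV. R s * expected_reward \<pi> i \<pi> s) = (\<Sum>s\<in>UNIV. agent_kernel \<pi> i s0 a0 s * state_value \<pi> i s)"
    unfolding R_def using gamma_pos gamma_less_1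
    by (subst sum_mult_row_fixpoint[OF row_resolvent_fixpoint[OF row_sums_le_trans_matrix[OF \<pi>]]])
      (auto simp: state_value_fixpoint[OF \<pi>, of i] intro!: sum.cong)
  finally show ?thesis
    unfolding occ_eq_visits q_value_def by (simp add: algebra_simps)
qed

lemma grad_pairing_eq:
  "\<pi> \<in> joint_policies A \<Longrightarrow>
    grad_pairing A P \<gamma> \<mu> F \<pi> \<sigma> = (\<Sum>j\<in>UNIV. \<Sum>s\<in>UNIV. occ \<pi> s * advantage \<pi> j (\<sigma> j) s)"
  unfolding grad_pairing_def advantage_def
  by (intro sum.cong refl) (simp add: pseudo_grad_eq sum_distrib_left mult_ac)

lemma grad_pairing_fun_upd:
  "\<pi> \<in> joint_policies A \<Longrightarrow>
    grad_pairing A P \<gamma> \<mu> F \<pi> (\<pi>(i := q)) = (\<Sum>s\<in>UNIV. occ \<pi> s * advantage \<pi> i q s)"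
  unfolding grad_pairing_eq by (subst sum.remove[of UNIV i]) (auto simp: advantage_def)

lemma utility_gain_le_DF:
  assumes \<pi>: "\<pi> \<in> joint_policies A" and p: "p \<in> policy_set A i"
  shows "util i (\<pi>(i := p)) - util i \<pi> \<le> DF \<pi> i (occ_vector (\<pi>(i := p)), 0) - DF \<pi> i (occ_vector \<pi>, 0)"
proof -
  have "F i (occ_vector (\<pi>(i := p)), minus_vec \<pi> i) - F i (occ_vector \<pi>, minus_vec \<pi> i)
      \<le> DF \<pi> i (occ_vector (\<pi>(i := p)) - occ_vector \<pi>, 0)"
    using F_concave \<pi> occ_vector_in_lam_set[OF \<pi>] occ_vector_in_lam_set[OF fun_upd_in_joint_policies[OF \<pi> p]]
    by (intro concave_on_le_tangent[OF has_derivative_F_fst[OF \<pi>], of "lam_set A"]) auto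
  thus ?thesis
    unfolding utility_eq minus_vec_fun_upd linear_diff[OF linear_DF_fst[OF \<pi>, of i], symmetric]
    by simp
qed

section \<open>Nash equilibria and the variational inequality\<close>

lemma advantage_segment:
  "advantage \<pi> i (\<lambda>s a. \<pi> i s a + t * (p s a - \<pi> i s a)) s = t * advantage \<pi> i p s"
  unfolding advantage_def by (simp add: sum_distrib_left mult_ac)

text \<open>First-order necessary condition at a maximum: along the segment from \<open>\<pi> i\<close> to \<open>p\<close> the
  utility can only decrease, and its right derivative is the expected advantage of \<open>p\<close>.\<close>
lemma nash_imp_advantage_nonpos:
  assumes \<pi>: "\<pi> \<in> joint_policies A" and nash: "nash A P \<gamma> \<mu> F \<pi>" and p: "p \<in> policy_set A i"
  shows "(\<Sum>s\<in>UNIV. occ \<pi> s * advantage \<pi> i p s) \<le> 0"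
proof -
  define \<pi>\<^sub>t where "\<pi>\<^sub>t t = \<pi>(i := \<lambda>s a. \<pi> i s a + t * (p s a - \<pi> i s a))" for t
  define y where "y t = (occ_vector (\<pi>\<^sub>t t), minus_vec \<pi> i)" for t
  define x where "x = (occ_vector \<pi>, minus_vec \<pi> i)"
  have "\<pi> i \<in> policy_set A i"
    using \<pi> unfolding joint_policies_def by simp
  hence segment: "(\<lambda>s a. \<pi> i s a + t * (p s a - \<pi> i s a)) \<in> policy_set A i" if "0 \<le> t" "t \<le> 1" for t
    using p that by (rule segment_in_policy_set)
  obtain B where B: "\<And>t. 0 \<le> t \<Longrightarrow> t \<le> 1 \<Longrightarrow> norm (occ_vector (\<pi>\<^sub>t t) - occ_vector \<pi>) \<le> B * t"
    unfolding \<pi>\<^sub>t_def using occ_vector_segment_lipschitz[OF \<pi> p] by blast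
  have small: "\<forall>\<^sub>F t in at_right 0. 0 < t \<and> t < (1::real)"
    using eventually_at_right_real[OF zero_less_one] by simp
  have y_lipschitz: "\<forall>\<^sub>F t in at_right 0. norm (y t - x) \<le> B * t"
    using small by eventually_elim (simp add: y_def x_def B)
  from has_derivative_remainder_tendsto_zero[OF DF_has_derivative[OF \<pi>, of i, folded x_def] y_lipschitz]
  have remainder: "((\<lambda>t. (F i (y t) - F i x - DF \<pi> i (y t - x)) / t) \<longlongrightarrow> 0) (at_right 0)" .
  have occ_lim: "((\<lambda>t. - (\<Sum>s\<in>UNIV. occ (\<pi>\<^sub>t t) s * advantage \<pi> i p s))
      \<longlongrightarrow> - (\<Sum>s\<in>UNIV. occ \<pi> s * advantage \<pi> i p s)) (at_right 0)"
    unfolding \<pi>\<^sub>t_def by (intro tendsto_intros occ_segment_tendsto[OF \<pi> p])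
  have "\<forall>\<^sub>F t in at_right 0.
      (F i (y t) - F i x - DF \<pi> i (y t - x)) / t \<le> - (\<Sum>s\<in>UNIV. occ (\<pi>\<^sub>t t) s * advantage \<pi> i p s)"
    using small
  proof eventually_elim
    case (elim t)
    have "F i (y t) - F i x \<le> 0"
      using nash segment[of t] elim unfolding nash_def approx_nash_def y_def x_def \<pi>\<^sub>t_def utility_eq
      by fastforce
    moreover have "DF \<pi> i (y t - x) = t * (\<Sum>s\<in>UNIV. occ (\<pi>\<^sub>t t) s * advantage \<pi> i p s)"
      using DF_performance_difference[OF \<pi> segment[of t]] elim
        linear_diff[OF linear_DF_fst[OF \<pi>, of i], of "occ_vector (\<pi>\<^sub>t t)" "occ_vector \<pi>"]
      unfolding y_def x_def \<pi>\<^sub>t_def advantage_segment by (simp add: sum_distrib_left mult_ac)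
    ultimately show ?case
      using elim by (simp add: divide_le_eq mult.commute)
  qed
  from tendsto_le[OF trivial_limit_at_right_real occ_lim remainder this]
  show ?thesis by simp
qed

lemma occ_fun_upd_le_max_occ_ratio_mult:
  assumes "\<pi> \<in> joint_policies A"
  shows "occ (\<pi>(i := p)) s \<le> max_occ_ratio \<pi> i p * occ \<pi> s"
proof -
  have "occ (\<pi>(i := p)) s / occ \<pi> s \<le> max_occ_ratio \<pi> i p"
    by (rule Max_ge) auto
  thus ?thesis
    using pos_divide_le_eq[OF occ_pos[rule_format, OF assms, of s]] by blast
qed

lemma max_occ_ratio_nonneg:
  assumes "\<pi> \<in> joint_policies A" "p \<in> policy_set A i"
  shows "0 \<le> max_occ_ratio \<pi> i p"
proof -
  have "0 < max_occ_ratio \<pi> i p * occ \<pi> s" for s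
    using less_le_trans[OF occ_pos[rule_format, OF fun_upd_in_joint_policies[OF assms]]
        occ_fun_upd_le_max_occ_ratio_mult[OF assms(1)]] .
  thus ?thesis
    using occ_pos[rule_format, OF assms(1)] zero_less_mult_pos2 less_imp_le by blast
qed

lemma max_occ_ratio_le:
  assumes \<pi>: "\<pi> \<in> joint_policies A" and p: "p \<in> policy_set A i"
    and \<delta>: "0 < \<delta>" "\<forall>\<pi>\<in>joint_policies A. \<forall>s. \<delta> \<le> occ \<pi> s"
  shows "max_occ_ratio \<pi> i p \<le> 1 / \<delta>"
proof -
  have \<pi>': "\<pi>(i := p) \<in> joint_policies A"
    by (rule fun_upd_in_joint_policies[OF \<pi> p])
  have "occ (\<pi>(i := p)) s / occ \<pi> s \<le> 1 / \<delta>" for s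
    using occ_le_1[OF \<pi>'] \<delta> \<pi> occ_pos \<pi>' by (intro frac_le) (auto intro: less_imp_le)
  thus ?thesis
    by (subst Max_le_iff) auto
qed

lemma exists_greedy_deviation:
  assumes "\<pi> \<in> joint_policies A"
  obtains q where "q \<in> policy_set A i"
    and "\<And>r s. r \<in> policy_set A i \<Longrightarrow> advantage \<pi> i r s \<le> advantage \<pi> i q s"
    and "\<And>s. 0 \<le> advantage \<pi> i q s"
proof -
  obtain q where q: "q \<in> policy_set A i"
    and greedy: "\<And>r s. r \<in> policy_set A i \<Longrightarrow> (\<Sum>a\<in>A i. r s a * q_value \<pi> i s a) \<le> (\<Sum>a\<in>A i. q s a * q_value \<pi> i s a)"
    using exists_greedy_policy actions_nonempty by metis
  have le: "advantage \<pi> i r s \<le> advantage \<pi> i q s" if "r \<in> policy_set A i" for r s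
    using greedy[OF that, of s] unfolding advantage_def by (simp add: left_diff_distrib sum_subtractf)
  have "\<pi> i \<in> policy_set A i"
    using assms unfolding joint_policies_def by simp
  hence "0 \<le> advantage \<pi> i q s" for s
    using le[of "\<pi> i" s] by (simp add: advantage_def)
  with q le show ?thesis
    by (rule that)
qed

lemma utility_gain_le_occ_ratio_mult:
  assumes \<pi>: "\<pi> \<in> joint_policies A" and p: "p \<in> policy_set A i"
    and pairing: "\<forall>\<sigma>\<in>joint_policies A. grad_pairing A P \<gamma> \<mu> F \<pi> \<sigma> \<le> \<epsilon>"
  shows "util i (\<pi>(i := p)) - util i \<pi> \<le> max_occ_ratio \<pi> i p * \<epsilon>"
proof -
  obtain q where q: "q \<in> policy_set A i" and adv_le: "\<And>r s. r \<in> policy_set A i \<Longrightarrow> advantage \<pi> i r s \<le> advantage \<pi> i q s"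
    and adv_nonneg: "\<And>s. 0 \<le> advantage \<pi> i q s"
    using exists_greedy_deviation[OF \<pi>] by blast
  have \<pi>': "\<pi>(i := p) \<in> joint_policies A"
    by (rule fun_upd_in_joint_policies[OF \<pi> p])
  have "util i (\<pi>(i := p)) - util i \<pi> \<le> (\<Sum>s\<in>UNIV. occ (\<pi>(i := p)) s * advantage \<pi> i p s)"
    using utility_gain_le_DF[OF \<pi> p] DF_performance_difference[OF \<pi> p] by simp
  also have "\<dots> \<le> (\<Sum>s\<in>UNIV. occ (\<pi>(i := p)) s * advantage \<pi> i q s)"
    using adv_le[OF p] occ_pos \<pi>' by (intro sum_mono mult_left_mono) (auto intro: less_imp_le)
  also have "\<dots> \<le> (\<Sum>s\<in>UNIV. max_occ_ratio \<pi> i p * occ \<pi> s * advantage \<pi> i q s)"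
    using occ_fun_upd_le_max_occ_ratio_mult[OF \<pi>] adv_nonneg by (intro sum_mono mult_right_mono) auto
  also have "\<dots> = max_occ_ratio \<pi> i p * grad_pairing A P \<gamma> \<mu> F \<pi> (\<pi>(i := q))"
    unfolding grad_pairing_fun_upd[OF \<pi>] by (simp add: sum_distrib_left sum_distrib_right mult_ac)
  also have "\<dots> \<le> max_occ_ratio \<pi> i p * \<epsilon>"
    using pairing fun_upd_in_joint_policies[OF \<pi> q] max_occ_ratio_nonneg[OF \<pi> p]
    by (intro mult_left_mono) auto
  finally show ?thesis .
qed

lemma nash_iff_grad_pairing_nonpos:
  assumes \<pi>: "\<pi> \<in> joint_policies A"
  shows "nash A P \<gamma> \<mu> F \<pi> \<longleftrightarrow> (\<forall>\<sigma>\<in>joint_policies A. grad_pairing A P \<gamma> \<mu> F \<pi> \<sigma> \<le> 0)"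
proof
  assume nash: "nash A P \<gamma> \<mu> F \<pi>"
  show "\<forall>\<sigma>\<in>joint_policies A. grad_pairing A P \<gamma> \<mu> F \<pi> \<sigma> \<le> 0"
  proof
    fix \<sigma> :: "'i \<Rightarrow> 's \<Rightarrow> 'a \<Rightarrow> real" assume "\<sigma> \<in> joint_policies A"
    thus "grad_pairing A P \<gamma> \<mu> F \<pi> \<sigma> \<le> 0"
      unfolding grad_pairing_eq[OF \<pi>] joint_policies_def
      by (intro sum_nonpos[of UNIV] nash_imp_advantage_nonpos[OF \<pi> nash]) simp
  qed
next
  assume "\<forall>\<sigma>\<in>joint_policies A. grad_pairing A P \<gamma> \<mu> F \<pi> \<sigma> \<le> 0"
  thus "nash A P \<gamma> \<mu> F \<pi>"
    unfolding nash_def approx_nash_def using utility_gain_le_occ_ratio_mult[OF \<pi>] by fastforce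
qed

lemma continuous_on_F_occ_vector:
  assumes \<pi>: "\<pi> \<in> joint_policies A"
  shows "continuous_on (joint_policy_vecs A) (\<lambda>x. F i (occ_vector (policy_of_vec x), minus_vec \<pi> i))"
proof (rule continuous_on_compose2[of "(\<lambda>l. (l, minus_vec \<pi> i)) ` lam_set A" "F i"])
  show "continuous_on ((\<lambda>l. (l, minus_vec \<pi> i)) ` lam_set A) (F i)"
    using F_differentiable \<pi>
    by (intro continuous_at_imp_continuous_on) (auto intro: differentiable_imp_continuous_within)
  show "continuous_on (joint_policy_vecs A) (\<lambda>x. (occ_vector (policy_of_vec x), minus_vec \<pi> i))"
    by (intro continuous_on_Pair continuous_on_const continuous_on_occ_vector)
  show "(\<lambda>x. (occ_vector (policy_of_vec x), minus_vec \<pi> i)) ` joint_policy_vecs A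
      \<subseteq> (\<lambda>l. (l, minus_vec \<pi> i)) ` lam_set A"
    using occ_vector_in_lam_set unfolding joint_policy_vecs_def by blast
qed

lemma best_responses_nonempty:
  assumes \<pi>: "\<pi> \<in> joint_policies A"
  shows "best_responses A P \<gamma> \<mu> F i \<pi> \<noteq> {}"
proof -
  define K where "K = joint_policy_vecs A \<inter> {x. \<forall>j s a. j \<noteq> i \<longrightarrow> x $ (j, s, a) = \<pi> j s a}"
  define f where "f x = F i (occ_vector (policy_of_vec x), minus_vec \<pi> i)" for x
  have fun_upd_in_K: "vec_of_policy (\<pi>(i := p)) \<in> K" if "p \<in> policy_set A i" for p
    using vec_of_policy_in_joint_policy_vecs[OF fun_upd_in_joint_policies[OF \<pi> that]]
    unfolding K_def by (simp add: vec_of_policy_def)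
  have "compact K"
    unfolding K_def
    by (intro compact_Int_closed compact_joint_policy_vecs closed_Collect_all closed_Collect_imp
        open_Collect_const closed_Collect_eq continuous_on_const continuous_on_component continuous_on_id)
  moreover have "K \<noteq> {}"
    using fun_upd_in_K[of "\<pi> i"] \<pi> unfolding joint_policies_def by auto
  moreover have "continuous_on K f"
    unfolding f_def K_def by (rule continuous_on_subset[OF continuous_on_F_occ_vector[OF \<pi>]]) blast
  ultimately obtain x where x: "x \<in> K" and x_max: "\<And>y. y \<in> K \<Longrightarrow> f y \<le> f x"
    using continuous_attains_sup by metis
  define p where "p = policy_of_vec x i"
  have x_eq: "policy_of_vec x = \<pi>(i := p)"
    using x unfolding K_def p_def policy_of_vec_def by (auto intro!: ext)
  have p: "p \<in> policy_set A i"
    using x unfolding K_def joint_policy_vecs_def joint_policies_def p_def by auto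
  have "util i (\<pi>(i := p')) \<le> util i (\<pi>(i := p))" if "p' \<in> policy_set A i" for p'
    using x_max[OF fun_upd_in_K[OF that]] unfolding f_def x_eq utility_eq by simp
  hence "p \<in> best_responses A P \<gamma> \<mu> F i \<pi>"
    unfolding best_responses_def using p by blast
  thus ?thesis
    by blast
qed

lemma occ_uniform_lower_bound: "\<exists>\<delta>>0. \<forall>\<pi>\<in>joint_policies A. \<forall>s. \<delta> \<le> occ \<pi> s"
proof -
  have "\<exists>\<delta>>0. \<forall>\<pi>\<in>joint_policies A. \<delta> \<le> occ \<pi> s" for s
  proof (cases "joint_policy_vecs A = ({} :: (real ^ ('i \<times> 's \<times> 'a)) set)")
    case True
    hence "joint_policies A = ({} :: ('i \<Rightarrow> 's \<Rightarrow> 'a \<Rightarrow> real) set)"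
      using vec_of_policy_in_joint_policy_vecs by blast
    thus ?thesis
      by (intro exI[of _ 1]) auto
  next
    case False
    obtain x where x: "x \<in> joint_policy_vecs A"
      and x_min: "\<And>y. y \<in> joint_policy_vecs A \<Longrightarrow> visits (policy_of_vec x) s \<le> visits (policy_of_vec y) s"
      using continuous_attains_inf[OF compact_joint_policy_vecs False continuous_on_visits] by metis
    have "0 < occ (policy_of_vec x) s"
      using occ_pos x unfolding joint_policy_vecs_def by blast
    moreover have "occ (policy_of_vec x) s \<le> occ \<pi> s" if "\<pi> \<in> joint_policies A" for \<pi>
      using x_min[OF vec_of_policy_in_joint_policy_vecs[OF that]] gamma_less_1
      unfolding occ_eq_visits by (simp add: mult_left_mono)
    ultimately show ?thesis
      by blast
  qed
  then obtain \<delta> where \<delta>_pos: "\<And>s. 0 < \<delta> s" and \<delta>_le: "\<And>s \<pi>. \<pi> \<in> joint_policies A \<Longrightarrow> \<delta> s \<le> occ \<pi> s"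
    using choice[of "\<lambda>s d. 0 < d \<and> (\<forall>\<pi>\<in>joint_policies A. d \<le> occ \<pi> s)"] by blast
  have "0 < Min (range \<delta>)"
    using \<delta>_pos by (subst Min_gr_iff) auto
  moreover have "Min (range \<delta>) \<le> occ \<pi> s" if "\<pi> \<in> joint_policies A" for \<pi> s
  proof -
    have "Min (range \<delta>) \<le> \<delta> s"
      by (rule Min_le) auto
    thus ?thesis
      using \<delta>_le[OF that, of s] by linarith
  qed
  ultimately show ?thesis
    by blast
qed

lemma bdd_above_INF_max_occ_ratio:
  "bdd_above ((\<lambda>\<sigma>. INF q\<in>best_responses A P \<gamma> \<mu> F i \<sigma>. max_occ_ratio \<sigma> i q) ` joint_policies A)"
proof -
  obtain \<delta> where \<delta>: "0 < \<delta>" "\<forall>\<pi>\<in>joint_policies A. \<forall>s. \<delta> \<le> occ \<pi> s"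
    using occ_uniform_lower_bound by blast
  have "(INF q\<in>best_responses A P \<gamma> \<mu> F i \<sigma>. max_occ_ratio \<sigma> i q) \<le> 1 / \<delta>"
    if \<sigma>: "\<sigma> \<in> joint_policies A" for \<sigma>
  proof -
    obtain q where q: "q \<in> best_responses A P \<gamma> \<mu> F i \<sigma>"
      using best_responses_nonempty[OF \<sigma>] by blast
    have "(INF q\<in>best_responses A P \<gamma> \<mu> F i \<sigma>. max_occ_ratio \<sigma> i q) \<le> max_occ_ratio \<sigma> i q"
      using max_occ_ratio_nonneg[OF \<sigma> best_responses_in_policy_set]
      by (intro cINF_lower[OF bdd_belowI2 q])
    also have "\<dots> \<le> 1 / \<delta>"
      by (rule max_occ_ratio_le[OF \<sigma> best_responses_in_policy_set[OF q] \<delta>])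
    finally show ?thesis .
  qed
  thus ?thesis
    by (auto simp: bdd_above_def)
qed

lemma approx_nash_of_grad_pairing_le:
  assumes \<pi>: "\<pi> \<in> joint_policies A" and \<epsilon>: "0 < \<epsilon>"
    and pairing: "\<forall>\<sigma>\<in>joint_policies A. grad_pairing A P \<gamma> \<mu> F \<pi> \<sigma> \<le> \<epsilon>"
  shows "approx_nash A P \<gamma> \<mu> F (C_G A P \<gamma> \<mu> F * \<epsilon>) \<pi>"
  unfolding approx_nash_def
proof (intro allI ballI)
  fix i and p :: "'s \<Rightarrow> 'a \<Rightarrow> real" assume p: "p \<in> policy_set A i"
  have "(util i (\<pi>(i := p)) - util i \<pi>) / \<epsilon> \<le> (INF q\<in>best_responses A P \<gamma> \<mu> F i \<pi>. max_occ_ratio \<pi> i q)"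
  proof (rule cINF_greatest[OF best_responses_nonempty[OF \<pi>]])
    fix q assume q: "q \<in> best_responses A P \<gamma> \<mu> F i \<pi>"
    hence "util i (\<pi>(i := p)) \<le> util i (\<pi>(i := q))"
      using p unfolding best_responses_def by blast
    thus "(util i (\<pi>(i := p)) - util i \<pi>) / \<epsilon> \<le> max_occ_ratio \<pi> i q"
      using utility_gain_le_occ_ratio_mult[OF \<pi> best_responses_in_policy_set[OF q] pairing] \<epsilon>
      by (simp add: pos_divide_le_eq)
  qed
  also have "\<dots> \<le> (SUP \<sigma>\<in>joint_policies A. INF q\<in>best_responses A P \<gamma> \<mu> F i \<sigma>. max_occ_ratio \<sigma> i q)"
    by (rule cSUP_upper[OF \<pi> bdd_above_INF_max_occ_ratio])
  also have "\<dots> \<le> C_G A P \<gamma> \<mu> F"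
    unfolding C_G_def by (rule Max_ge) auto
  finally show "util i (\<pi>(i := p)) - util i \<pi> \<le> C_G A P \<gamma> \<mu> F * \<epsilon>"
    using \<epsilon> by (simp add: pos_divide_le_eq)
qed

end

theorem proposition2:
  fixes A :: "'i::finite \<Rightarrow> 'a::finite set"
    and P :: "'s::finite \<Rightarrow> ('i \<Rightarrow> 'a) \<Rightarrow> 's \<Rightarrow> real"
    and \<mu> :: "'s \<Rightarrow> real"
    and \<gamma> :: real
    and F :: "'i \<Rightarrow> ((real ^ ('i \<times> 's \<times> 'a)) \<times> (real ^ ('i \<times> 's \<times> 'a))) \<Rightarrow> real"
  assumes A_ne: "\<forall>i. A i \<noteq> {}"
    and P_kernel: "\<forall>s. \<forall>a\<in>joint_actions A. (\<forall>s'. 0 \<le> P s a s') \<and> (\<Sum>s'\<in>UNIV. P s a s') = 1"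
    and mu_dist: "(\<forall>s. 0 \<le> \<mu> s) \<and> (\<Sum>s\<in>UNIV. \<mu> s) = 1"
    and gamma: "0 < \<gamma>" "\<gamma> < 1"
    and F_diff: "\<forall>i. \<forall>l\<in>lam_set A. \<forall>\<pi>\<in>joint_policies A. F i differentiable (at (l, minus_vec \<pi> i))"
    and A1: "\<forall>i. \<forall>\<pi>\<in>joint_policies A. concave_on (lam_set A) (\<lambda>l. F i (l, minus_vec \<pi> i))"
    and A2: "\<forall>\<pi>\<in>joint_policies A. \<forall>s. 0 < occ_state A P \<gamma> \<mu> \<pi> s"
  shows "(\<forall>\<pi>s\<in>joint_policies A.
            nash A P \<gamma> \<mu> F \<pi>s \<longleftrightarrow> (\<forall>\<pi>\<in>joint_policies A. grad_pairing A P \<gamma> \<mu> F \<pi>s \<pi> \<le> 0))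
       \<and> (\<forall>\<epsilon>>0. \<forall>\<pi>s\<in>joint_policies A.
            (\<forall>\<pi>\<in>joint_policies A. grad_pairing A P \<gamma> \<mu> F \<pi>s \<pi> \<le> \<epsilon>)
              \<longrightarrow> approx_nash A P \<gamma> \<mu> F (C_G A P \<gamma> \<mu> F * \<epsilon>) \<pi>s)"
proof -
  interpret general_utility_markov_game A P \<mu> \<gamma> F
    by unfold_locales (use assms in auto)
  show ?thesis
    using nash_iff_grad_pairing_nonpos approx_nash_of_grad_pairing_le by blast
qed

end
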